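(* Let $s > 3/2$, $u_0 \in H^s(\mathbb{T})$, let $u$ be the corresponding unique solution of the periodic Fornberg–Whitham Cauchy problem $u_t + \frac{3}{2} u u_x = Q u_x$, $u(\cdot,0) = u_0$, and let $T \in \,]0,\infty]$ be its maximal life span. Then for every $t \in [0,T[$, $$\|u(t)\|_{L^2(\mathbb{T})} \leq e^{t}\, \|u_0\|_{L^2(\mathbb{T})}.$$
   Context: $\mathbb{T} = \mathbb{R}/\mathbb{Z}$ is the one-dimensional torus; functions on $\mathbb{T}$ are identified with $1$-periodic functions on $\mathbb{R}$, and $H^r(\mathbb{T})$ denotes the periodic Sobolev space. $Q := (\mathrm{id} - \partial_x^2)^{-1} \colon H^r(\mathbb{T}) \to H^{r+2}(\mathbb{T})$ acts on the spatial variable at each fixed time, and $u(t)$ denotes $x \mapsto u(x,t)$. It is known (well-posedness) that for $s>3/2$ and $u_0 \in H^s(\mathbb{T})$ there is $T_0>0$ such that the problem $u_t + \frac{3}{2}uu_x = Qu_x$, $u(x,0)=u_0(x)$ has a unique solution $u \in C([0,T_0],H^s(\mathbb{T})) \cap C^1([0,T_0],H^{s-1}(\mathbb{T}))$. The maximal life span $T$ is the supremum of all such $T_0$; $u$ is then defined on $[0,T[$. *)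

theory Defs
  imports "HOL-Analysis.Analysis"
begin

text \<open>Functions on the torus R/Z are 1-periodic real functions.\<close>
definition periodic1 :: "(real \<Rightarrow> real) \<Rightarrow> bool" where
  "periodic1 f \<longleftrightarrow> (\<forall>x. f (x + 1) = f x)"

definition in_L2T :: "(real \<Rightarrow> real) \<Rightarrow> bool" where
  "in_L2T f \<longleftrightarrow> periodic1 f \<and> f measurable_on {0..1} \<and> (\<lambda>x. (f x)^2) integrable_on {0..1}"

definition L2T_norm :: "(real \<Rightarrow> real) \<Rightarrow> real" where
  "L2T_norm f = sqrt (integral {0..1} (\<lambda>x. (f x)^2))"

definition fcoeff :: "(real \<Rightarrow> real) \<Rightarrow> int \<Rightarrow> complex" where
  "fcoeff f k = integral {0..1} (\<lambda>x. complex_of_real (f x) * cis (- 2 * pi * real_of_int k * x))"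

definition sob_weight :: "real \<Rightarrow> int \<Rightarrow> real" where
  "sob_weight r k = (1 + (2 * pi * real_of_int k)^2) powr r"

definition in_Hs :: "real \<Rightarrow> (real \<Rightarrow> real) \<Rightarrow> bool" where
  "in_Hs r f \<longleftrightarrow> in_L2T f \<and> (\<lambda>k. sob_weight r k * (cmod (fcoeff f k))^2) summable_on UNIV"

definition Hs_norm :: "real \<Rightarrow> (real \<Rightarrow> real) \<Rightarrow> real" where
  "Hs_norm r f = sqrt (\<Sum>\<^sub>\<infinity>k\<in>UNIV. sob_weight r k * (cmod (fcoeff f k))^2)"

definition Dx :: "(real \<Rightarrow> real) \<Rightarrow> (real \<Rightarrow> real)" where
  "Dx f = (SOME g. in_L2T g \<and> (\<forall>k. fcoeff g k = \<i> * complex_of_real (2 * pi * real_of_int k) * fcoeff f k))"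

text \<open>Q = (id - d_x^2)^{-1}, via Fourier multiplier 1/(1 + 4 pi^2 k^2).\<close>
definition Qop :: "(real \<Rightarrow> real) \<Rightarrow> (real \<Rightarrow> real)" where
  "Qop f = (SOME g. in_L2T g \<and> (\<forall>k. fcoeff g k = fcoeff f k / complex_of_real (1 + (2 * pi * real_of_int k)^2)))"

text \<open>u is a solution on [0,T0] in C([0,T0],H^s) \<inter> C^1([0,T0],H^(s-1)); u t x is u(x,t).\<close>
definition FW_solution :: "real \<Rightarrow> (real \<Rightarrow> real) \<Rightarrow> real \<Rightarrow> (real \<Rightarrow> real \<Rightarrow> real) \<Rightarrow> bool" where
  "FW_solution s u0 T0 u \<longleftrightarrow>
     u 0 = u0 \<and>
     (\<forall>t\<in>{0..T0}. in_Hs s (u t)) \<and>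
     (\<forall>t\<in>{0..T0}. ((\<lambda>\<tau>. Hs_norm s (\<lambda>x. u \<tau> x - u t x)) \<longlongrightarrow> 0) (at t within {0..T0})) \<and>
     (\<exists>w. (\<forall>t\<in>{0..T0}. in_Hs (s - 1) (w t)) \<and>
          (\<forall>t\<in>{0..T0}. ((\<lambda>h. Hs_norm (s - 1) (\<lambda>x. (u (t + h) x - u t x) / h - w t x)) \<longlongrightarrow> 0)
                           (at 0 within {h. t + h \<in> {0..T0}})) \<and>
          (\<forall>t\<in>{0..T0}. ((\<lambda>\<tau>. Hs_norm (s - 1) (\<lambda>x. w \<tau> x - w t x)) \<longlongrightarrow> 0) (at t within {0..T0})) \<and>
          (\<forall>t\<in>{0..T0}. AE x in lborel. w t x + 3 / 2 * u t x * Dx (u t) x = Qop (Dx (u t)) x))"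

definition life_span :: "real \<Rightarrow> (real \<Rightarrow> real) \<Rightarrow> ereal" where
  "life_span s u0 = Sup {ereal T0 | T0. T0 > 0 \<and> (\<exists>v. FW_solution s u0 T0 v)}"

end

theory Submission
  imports Defs "HOL-Analysis.Radon_Nikodym"
begin

(* The L2 norm of the solution is in fact conserved, which gives the bound since exp t >= 1.
   For s > 3/2 the functions u(t), u_x(t) and Q u_x(t) have absolutely summable Fourier
   coefficients, so they agree almost everywhere with continuous periodic functions; this uses
   uniqueness of Fourier coefficients, obtained from Stone-Weierstrass on the circle. Multiplying
   the equation by u and integrating over a period, u^2 u_x = (u^3/3)' integrates to 0, and
   (Q u_x, u) = 0 because the Fourier multiplier of Q d_x is odd. Hence the time derivative w of u
   is orthogonal to u. Since |(f, g)| <= C |f|_{H^r} |g|_{H^r} for r = s - 1 > 1/2, the difference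
   quotients of E(t) = |u(t)|^2 tend to 2 (w, u) = 0, so E has derivative 0 and is constant. *)

section \<open>Fourier modes\<close>

definition ek :: "int \<Rightarrow> real \<Rightarrow> complex" where
  "ek k x = cis (2 * pi * real_of_int k * x)"

lemma ek_mult: "ek j x * ek k x = ek (j + k) x"
  unfolding ek_def by (simp add: cis_mult algebra_simps)

lemma norm_ek [simp]: "norm (ek k x) = 1"
  unfolding ek_def by simp

lemma ek_0 [simp]: "ek 0 x = 1"
  unfolding ek_def by simp

lemma ek_at_0 [simp]: "ek k 0 = 1"
  unfolding ek_def by simp

lemma ek_at_1 [simp]: "ek k 1 = 1"
  unfolding ek_def using cis_multiple_2pi[of "real_of_int k"] by simp

lemma ek_periodic: "ek k (x + 1) = ek k x"
proof -
  have "ek k (x + 1) = ek k x * ek k 1"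
    unfolding ek_def by (simp add: cis_mult algebra_simps)
  then show ?thesis by simp
qed

lemma cnj_ek: "cnj (ek k x) = ek (-k) x"
  unfolding ek_def by (simp add: cis_cnj)

lemma continuous_on_ek [continuous_intros]: "continuous_on S (ek k)"
  unfolding ek_def by (intro continuous_intros)

lemma ek_has_vector_derivative:
  "(ek k has_vector_derivative (\<i> * complex_of_real (2 * pi * real_of_int k) * ek k x)) (at x within S)"
  unfolding ek_def has_vector_derivative_def
  by (auto intro!: derivative_eq_intros simp: algebra_simps scaleR_conv_of_real)

lemma ek_has_integral:
  assumes "k \<noteq> 0" and "a \<le> b"
  shows "(ek k has_integral (ek k b - ek k a) / (\<i> * complex_of_real (2 * pi * real_of_int k))) {a..b}"
proof -
  define c where "c = \<i> * complex_of_real (2 * pi * real_of_int k)"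
  have "c \<noteq> 0" using assms(1) by (simp add: c_def)
  have "(ek k has_integral (ek k b / c - ek k a / c)) {a..b}"
  proof (rule fundamental_theorem_of_calculus[OF assms(2)])
    fix x
    have "((\<lambda>x. ek k x / c) has_vector_derivative (c * ek k x) / c) (at x within {a..b})"
      using bounded_linear.has_vector_derivative[OF bounded_linear_divide ek_has_vector_derivative]
      unfolding c_def by blast
    then show "((\<lambda>x. ek k x / c) has_vector_derivative ek k x) (at x within {a..b})"
      using \<open>c \<noteq> 0\<close> by simp
  qed
  then show ?thesis by (simp only: c_def diff_divide_distrib)
qed

lemma integral_ek: "integral {0..1} (ek k) = (if k = 0 then 1 else 0)"
proof (cases "k = 0")
  case True
  then have "ek k = (\<lambda>_. 1)" by auto
  then show ?thesis using True by simp
qed (use ek_has_integral[of k 0 1] in \<open>simp add: integral_unique\<close>)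

lemma integral_ek_orthonormal: "integral {0..1} (\<lambda>x. ek (-k) x * ek j x) = (if j = k then 1 else 0)"
  by (simp add: ek_mult integral_ek)

lemma fcoeff_eq_integral_ek: "fcoeff f k = integral {0..1} (\<lambda>x. ek (-k) x * complex_of_real (f x))"
  unfolding fcoeff_def ek_def by (simp add: mult.commute)

lemma fcoeff_uminus: "fcoeff f (-k) = cnj (fcoeff f k)"
  unfolding fcoeff_def integral_cnj by (simp add: cis_cnj)


lemma absolutely_integrable_of_real:
  fixes f :: "real \<Rightarrow> real"
  assumes "f absolutely_integrable_on S"
  shows "(\<lambda>x. complex_of_real (f x)) absolutely_integrable_on S"
  using absolutely_integrable_linear[OF assms bounded_linear_of_real] by (simp add: o_def)

lemma absolutely_integrable_times_continuous:
  fixes v G :: "real \<Rightarrow> 'a::{euclidean_space,real_normed_field}"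
  assumes v: "v absolutely_integrable_on {a..b}" and G: "continuous_on {a..b} G"
  shows "(\<lambda>x. v x * G x) absolutely_integrable_on {a..b}"
proof -
  have "bounded (G ` {a..b})"
    by (intro compact_imp_bounded compact_continuous_image G) auto
  then have "(\<lambda>x. G x * v x) absolutely_integrable_on {a..b}"
    by (intro absolutely_integrable_bounded_measurable_product[OF bilinear_times
          continuous_imp_measurable_on_sets_lebesgue[OF G] _ _ v]) auto
  then show ?thesis by (simp add: mult.commute)
qed

lemma integrable_times_continuous:
  fixes v G :: "real \<Rightarrow> 'a::{euclidean_space,real_normed_field}"
  assumes "v absolutely_integrable_on {a..b}" and "continuous_on {a..b} G"
  shows "(\<lambda>x. v x * G x) integrable_on {a..b}"
  using absolutely_integrable_times_continuous[OF assms] by (simp add: absolutely_integrable_on_def)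

lemma in_L2T_absolutely_integrable:
  assumes "in_L2T f"
  shows "f absolutely_integrable_on {0..1}"
proof (rule measurable_bounded_by_integrable_imp_absolutely_integrable)
  show "f \<in> borel_measurable (lebesgue_on {0..1})"
    using assms by (simp add: in_L2T_def measurable_on_iff_borel_measurable)
  show "(\<lambda>x. (1 + (f x)^2) / 2) integrable_on {0..1}"
    using assms unfolding in_L2T_def by (intro integrable_on_divide integrable_add integrable_const_ivl) auto
  show "norm (f x) \<le> (1 + (f x)^2) / 2" for x
    using sum_squares_bound[of 1 "\<bar>f x\<bar>"] by (simp add: power2_eq_square)
qed simp

lemma fcoeff_integrable:
  assumes "f absolutely_integrable_on {0..1}"
  shows "(\<lambda>x. complex_of_real (f x) * cis (- 2 * pi * real_of_int k * x)) integrable_on {0..1}"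
proof -
  have "(\<lambda>x. complex_of_real (f x) * ek (-k) x) integrable_on {0..1}"
    by (rule integrable_times_continuous[OF absolutely_integrable_of_real[OF assms] continuous_on_ek])
  then show ?thesis by (simp add: ek_def)
qed

lemma of_real_integral:
  fixes g :: "real \<Rightarrow> real"
  assumes "g integrable_on S"
  shows "complex_of_real (integral S g) = integral S (\<lambda>x. complex_of_real (g x))"
  by (rule integral_unique[symmetric], rule has_integral_of_real, rule integrable_integral[OF assms])

section \<open>Fourier uniqueness\<close>

lemma integral_times_ek_eq_0:
  assumes "\<And>k. fcoeff f k = 0"
  shows "integral {0..1} (\<lambda>x. complex_of_real (f x) * ek k x) = 0"
  using fcoeff_eq_integral_ek[of f "-k"] assms by (simp add: mult.commute)

inductive circle_poly :: "(complex \<Rightarrow> real) \<Rightarrow> bool" where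
  circle_poly_const: "circle_poly (\<lambda>z. c)"
| circle_poly_Re: "circle_poly Re"
| circle_poly_Im: "circle_poly Im"
| circle_poly_add: "circle_poly p \<Longrightarrow> circle_poly q \<Longrightarrow> circle_poly (\<lambda>z. p z + q z)"
| circle_poly_mult: "circle_poly p \<Longrightarrow> circle_poly q \<Longrightarrow> circle_poly (\<lambda>z. p z * q z)"

lemma continuous_on_circle_poly: "circle_poly p \<Longrightarrow> continuous_on S p"
  by (induction rule: circle_poly.induct) (auto intro!: continuous_intros)

definition trig_sum :: "(complex \<times> int) list \<Rightarrow> real \<Rightarrow> complex" where
  "trig_sum L x = (\<Sum>(c, k)\<leftarrow>L. c * ek k x)"

definition trig_terms_product ::
    "(complex \<times> int) list \<Rightarrow> (complex \<times> int) list \<Rightarrow> (complex \<times> int) list" where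
  "trig_terms_product L1 L2 = concat (map (\<lambda>(c, j). map (\<lambda>(d, k). (c * d, j + k)) L2) L1)"

lemma trig_sum_Nil [simp]: "trig_sum [] x = 0"
  by (simp add: trig_sum_def)

lemma trig_sum_Cons [simp]: "trig_sum ((c, k) # L) x = c * ek k x + trig_sum L x"
  by (simp add: trig_sum_def)

lemma trig_sum_append [simp]: "trig_sum (L1 @ L2) x = trig_sum L1 x + trig_sum L2 x"
  by (simp add: trig_sum_def)

lemma trig_sum_trig_terms_product:
  "trig_sum (trig_terms_product L1 L2) x = trig_sum L1 x * trig_sum L2 x"
proof (induction L1)
  case Nil
  then show ?case by (simp add: trig_terms_product_def)
next
  case (Cons p L1)
  obtain c j where p: "p = (c, j)" by (cases p)
  have shift: "trig_sum (map (\<lambda>(d, k). (c * d, j + k)) L) x = c * ek j x * trig_sum L x" for L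
    by (induction L) (auto simp: algebra_simps ek_mult[symmetric])
  have "trig_terms_product (p # L1) L2 = map (\<lambda>(d, k). (c * d, j + k)) L2 @ trig_terms_product L1 L2"
    by (simp add: trig_terms_product_def p)
  then have "trig_sum (trig_terms_product (p # L1) L2) x
      = c * ek j x * trig_sum L2 x + trig_sum L1 x * trig_sum L2 x"
    using Cons by (simp only: trig_sum_append shift)
  then show ?case by (simp add: p algebra_simps)
qed

lemma circle_poly_eq_trig_sum:
  "circle_poly p \<Longrightarrow> \<exists>L. \<forall>x. complex_of_real (p (ek 1 x)) = trig_sum L x"
proof (induction rule: circle_poly.induct)
  case (circle_poly_const c)
  show ?case by (rule exI[of _ "[(complex_of_real c, 0)]"]) simp
next
  case circle_poly_Re
  have "complex_of_real (Re (ek 1 x)) = trig_sum [(1/2, 1), (1/2, -1)] x" for x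
    using complex_add_cnj[of "ek 1 x"] by (simp add: cnj_ek[symmetric] field_simps)
  then show ?case by blast
next
  case circle_poly_Im
  have "trig_sum [(-\<i>/2, 1), (\<i>/2, -1)] x = -\<i>/2 * (ek 1 x - cnj (ek 1 x))" for x
    by (simp add: cnj_ek algebra_simps)
  then have "complex_of_real (Im (ek 1 x)) = trig_sum [(-\<i>/2, 1), (\<i>/2, -1)] x" for x
    by (simp add: complex_diff_cnj complex_eq_iff)
  then show ?case by blast
next
  case (circle_poly_add p q)
  then obtain L1 L2 where "\<forall>x. complex_of_real (p (ek 1 x)) = trig_sum L1 x"
    "\<forall>x. complex_of_real (q (ek 1 x)) = trig_sum L2 x" by blast
  then show ?case by (intro exI[of _ "L1 @ L2"]) simp
next
  case (circle_poly_mult p q)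
  then obtain L1 L2 where "\<forall>x. complex_of_real (p (ek 1 x)) = trig_sum L1 x"
    "\<forall>x. complex_of_real (q (ek 1 x)) = trig_sum L2 x" by blast
  then show ?case by (intro exI[of _ "trig_terms_product L1 L2"]) (simp add: trig_sum_trig_terms_product)
qed

lemma integral_times_trig_sum_eq_0:
  fixes f :: "real \<Rightarrow> real"
  assumes f: "f absolutely_integrable_on {0..1}" and z: "\<And>k. fcoeff f k = 0"
  shows "integral {0..1} (\<lambda>x. complex_of_real (f x) * trig_sum L x) = 0"
    "(\<lambda>x. complex_of_real (f x) * trig_sum L x) integrable_on {0..1}"
proof (induction L)
  case Nil
  { case 1 show ?case by simp }
  { case 2 show ?case by (simp add: integrable_0) }
next
  case (Cons p L)
  obtain c k where p: "p = (c, k)" by (cases p)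
  have int_ek: "(\<lambda>x. c * (complex_of_real (f x) * ek k x)) integrable_on {0..1}"
    by (intro integrable_on_mult_right integrable_times_continuous
        absolutely_integrable_of_real[OF f] continuous_on_ek)
  have eq: "(\<lambda>x. complex_of_real (f x) * trig_sum (p # L) x) =
     (\<lambda>x. c * (complex_of_real (f x) * ek k x) + complex_of_real (f x) * trig_sum L x)"
    by (auto simp: p algebra_simps)
  { case 1 show ?case unfolding eq
      by (simp add: integral_add[OF int_ek Cons(2)] integral_mult_right
          integral_times_ek_eq_0[OF z] Cons(1)) }
  { case 2 show ?case unfolding eq by (rule integrable_add[OF int_ek Cons(2)]) }
qed

lemma integral_times_circle_poly_eq_0:
  fixes f :: "real \<Rightarrow> real"
  assumes f: "f absolutely_integrable_on {0..1}" and z: "\<And>k. fcoeff f k = 0"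
    and p: "circle_poly p"
  shows "integral {0..1} (\<lambda>x. f x * p (ek 1 x)) = 0"
proof -
  obtain L where L: "\<And>x. complex_of_real (p (ek 1 x)) = trig_sum L x"
    using circle_poly_eq_trig_sum[OF p] by blast
  have "(\<lambda>x. f x * p (ek 1 x)) integrable_on {0..1}"
    by (intro integrable_times_continuous[OF f] continuous_on_compose2[OF continuous_on_circle_poly[OF p]])
      (auto intro: continuous_on_ek)
  then have "complex_of_real (integral {0..1} (\<lambda>x. f x * p (ek 1 x)))
      = integral {0..1} (\<lambda>x. complex_of_real (f x) * trig_sum L x)"
    by (simp add: of_real_integral L[symmetric])
  also have "\<dots> = 0" by (rule integral_times_trig_sum_eq_0(1)[OF f z])
  finally show ?thesis by simp
qed

lemma integral_times_continuous_on_circle_eq_0: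
  fixes f :: "real \<Rightarrow> real"
  assumes f: "f absolutely_integrable_on {0..1}" and z: "\<And>k. fcoeff f k = 0"
    and \<psi>: "continuous_on (sphere 0 1) \<psi>"
  shows "integral {0..1} (\<lambda>x. f x * \<psi> (ek 1 x)) = 0"
proof (rule ccontr)
  let ?I = "integral {0..1} (\<lambda>x. f x * \<psi> (ek 1 x))"
  define C where "C = integral {0..1} (\<lambda>x. \<bar>f x\<bar>)"
  assume "?I \<noteq> 0"
  have int_abs: "(\<lambda>x. \<bar>f x\<bar>) integrable_on {0..1}"
    using f by (simp add: absolutely_integrable_on_def)
  then have "C \<ge> 0" unfolding C_def by (rule integral_nonneg) simp
  define e where "e = \<bar>?I\<bar> / (C + 1)"
  have "e > 0" using \<open>?I \<noteq> 0\<close> \<open>C \<ge> 0\<close> by (simp add: e_def)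
  obtain p where p: "circle_poly p" and pe: "\<And>z. z \<in> sphere 0 1 \<Longrightarrow> \<bar>\<psi> z - p z\<bar> < e"
  proof -
    have "\<exists>p. circle_poly p \<and> (\<forall>z\<in>sphere 0 1. \<bar>\<psi> z - p z\<bar> < e)"
    proof (rule Stone_Weierstrass_HOL[of "sphere 0 1" circle_poly \<psi> e])
      show "\<And>x y. x \<in> sphere 0 1 \<and> y \<in> sphere 0 1 \<and> x \<noteq> y \<Longrightarrow> \<exists>p. circle_poly p \<and> p x \<noteq> p y"
        by (metis complex_eq_iff circle_poly_Im circle_poly_Re)
    qed (auto intro: circle_poly.intros continuous_on_circle_poly \<psi> \<open>e > 0\<close>)
    then show thesis using that by blast
  qed
  have cont_comp: "continuous_on {0..1} (\<lambda>x. g (ek 1 x))" if "continuous_on (sphere 0 1) g" for g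
    by (rule continuous_on_compose2[OF that continuous_on_ek]) auto
  have int\<psi>: "(\<lambda>x. f x * \<psi> (ek 1 x)) integrable_on {0..1}"
    by (intro integrable_times_continuous[OF f] cont_comp \<psi>)
  have intp: "(\<lambda>x. f x * p (ek 1 x)) integrable_on {0..1}"
    by (intro integrable_times_continuous[OF f] cont_comp continuous_on_circle_poly[OF p])
  have "?I = integral {0..1} (\<lambda>x. f x * (\<psi> (ek 1 x) - p (ek 1 x)))"
    using integral_times_circle_poly_eq_0[OF f z p] integral_diff[OF int\<psi> intp]
    by (simp add: algebra_simps)
  also have "norm \<dots> \<le> integral {0..1} (\<lambda>x. e * \<bar>f x\<bar>)"
  proof (rule integral_norm_bound_integral)
    show "(\<lambda>x. f x * (\<psi> (ek 1 x) - p (ek 1 x))) integrable_on {0..1}"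
      using integrable_diff[OF int\<psi> intp] by (simp add: algebra_simps)
    show "norm (f x * (\<psi> (ek 1 x) - p (ek 1 x))) \<le> e * \<bar>f x\<bar>" for x
    proof -
      have "\<bar>\<psi> (ek 1 x) - p (ek 1 x)\<bar> \<le> e" using pe[of "ek 1 x"] by simp
      then have "\<bar>f x\<bar> * \<bar>\<psi> (ek 1 x) - p (ek 1 x)\<bar> \<le> \<bar>f x\<bar> * e"
        by (rule mult_left_mono) simp
      then show ?thesis by (simp add: abs_mult mult.commute)
    qed
  qed (rule integrable_on_mult_right[OF int_abs])
  also have "\<dots> = e * C" by (simp add: C_def)
  also have "\<dots> < \<bar>?I\<bar>"
    using \<open>?I \<noteq> 0\<close> \<open>C \<ge> 0\<close> by (simp add: e_def field_simps)
  finally show False by simp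
qed

lemma ek_1_image: "ek 1 ` {0..1} = sphere 0 1"
proof
  show "ek 1 ` {0..1} \<subseteq> sphere 0 1" by auto
  show "sphere 0 1 \<subseteq> ek 1 ` {0..1}"
  proof
    fix z :: complex assume "z \<in> sphere 0 1"
    then have "z \<noteq> 0" and "sgn z = z" by (auto simp: sgn_div_norm)
    with Arg_correct have z: "z = cis (Arg z)" and a: "- pi < Arg z" "Arg z \<le> pi" by auto
    show "z \<in> ek 1 ` {0..1}"
    proof (cases "Arg z \<ge> 0")
      case True
      have "ek 1 (Arg z / (2 * pi)) = z" unfolding ek_def using z by simp
      moreover have "Arg z / (2 * pi) \<in> {0..1}" using True a by (auto simp: field_simps)
      ultimately show ?thesis by (metis imageI)
    next
      case False
      have "ek 1 (Arg z / (2 * pi) + 1) = z"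
        using ek_periodic[of 1 "Arg z / (2 * pi)"] unfolding ek_def using z by simp
      moreover have "Arg z / (2 * pi) + 1 \<in> {0..1}" using False a by (auto simp: field_simps)
      ultimately show ?thesis by (metis imageI)
    qed
  qed
qed

lemma ek_1_eq_imp_eq:
  assumes x: "x \<in> {0..1}" and y: "y \<in> {0..1}" and e: "ek 1 x = ek 1 y"
  shows "x = y \<or> {x, y} = {0, 1}"
proof -
  from e have "sin (2 * pi * x) = sin (2 * pi * y) \<and> cos (2 * pi * x) = cos (2 * pi * y)"
    unfolding ek_def by (metis cis.sel(1) cis.sel(2) of_int_1 mult.right_neutral)
  then obtain n :: int where "2 * pi * x = 2 * pi * y + 2 * pi * real_of_int n"
    using sin_cos_eq_iff by blast
  then have "2 * pi * x = 2 * pi * (y + real_of_int n)" by (simp add: distrib_left)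
  then have n: "x = y + real_of_int n" by simp
  then have "real_of_int n \<le> 1" "real_of_int n \<ge> -1" using x y by auto
  then have "n \<in> {-1, 0, 1}" by auto
  then show ?thesis using n x y by auto
qed

lemma periodic_continuous_factors_through_circle:
  fixes \<phi> :: "real \<Rightarrow> real"
  assumes c: "continuous_on {0..1} \<phi>" and p: "\<phi> 0 = \<phi> 1"
  obtains \<psi> where "continuous_on (sphere 0 1) \<psi>" "\<And>x. x \<in> {0..1} \<Longrightarrow> \<psi> (ek 1 x) = \<phi> x"
proof -
  define \<psi> where "\<psi> z = \<phi> (SOME x. x \<in> {0..1} \<and> ek 1 x = z)" for z
  have eq: "\<psi> (ek 1 x) = \<phi> x" if x: "x \<in> {0..1}" for x
  proof -
    let ?y = "SOME y. y \<in> {0..1} \<and> ek 1 y = ek 1 x"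
    have "?y \<in> {0..1} \<and> ek 1 ?y = ek 1 x"
      by (rule someI_ex) (use x in blast)
    then show ?thesis
      unfolding \<psi>_def using ek_1_eq_imp_eq[OF _ x, of ?y] p by (auto simp: doubleton_eq_iff)
  qed
  have q: "quotient_map (top_of_set {0..1}) (top_of_set (sphere 0 1)) (ek 1)"
  proof (rule continuous_imp_quotient_map)
    show "continuous_map (top_of_set {0..1}) (top_of_set (sphere 0 1)) (ek 1)"
      by (auto simp: continuous_map_subtopology_eu intro: continuous_intros)
    show "compact_space (top_of_set {0..1::real})"
      by (simp add: compact_space_subtopology)
    show "Hausdorff_space (top_of_set (sphere (0::complex) 1))"
      by (rule Hausdorff_space_subtopology) simp
    show "ek 1 ` topspace (top_of_set {0..1}) = topspace (top_of_set (sphere 0 1))"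
      using ek_1_image by simp
  qed
  have "continuous_map (top_of_set {0..1}) euclideanreal (\<psi> \<circ> ek 1)"
    unfolding continuous_map_iff_continuous
    by (rule continuous_on_eq[OF c]) (simp add: eq)
  then have "continuous_map (top_of_set (sphere 0 1)) euclideanreal \<psi>"
    by (rule continuous_compose_quotient_map[OF q])
  then show thesis using that eq by (auto simp: continuous_map_iff_continuous)
qed

lemma integral_times_periodic_continuous_eq_0:
  fixes f :: "real \<Rightarrow> real"
  assumes f: "f absolutely_integrable_on {0..1}" and z: "\<And>k. fcoeff f k = 0"
    and c: "continuous_on {0..1} \<phi>" and p: "\<phi> 0 = \<phi> 1"
  shows "integral {0..1} (\<lambda>x. f x * \<phi> x) = 0"
proof -
  obtain \<psi> where \<psi>: "continuous_on (sphere 0 1) \<psi>" "\<And>x. x \<in> {0..1} \<Longrightarrow> \<psi> (ek 1 x) = \<phi> x"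
    using periodic_continuous_factors_through_circle[OF c p] by blast
  have "integral {0..1} (\<lambda>x. f x * \<phi> x) = integral {0..1} (\<lambda>x. f x * \<psi> (ek 1 x))"
    by (rule integral_cong) (simp add: \<psi>)
  also have "\<dots> = 0" by (rule integral_times_continuous_on_circle_eq_0[OF f z \<psi>(1)])
  finally show ?thesis .
qed

definition ramp :: "real \<Rightarrow> nat \<Rightarrow> real \<Rightarrow> real" where
  "ramp a n x = max 0 (min 1 (min (real (Suc n) * (x - a)) (real (Suc n) * (1 - x))))"

lemma continuous_on_ramp: "continuous_on S (ramp a n)"
  unfolding ramp_def by (intro continuous_intros)

lemma ramp_bounds: "0 \<le> ramp a n x" "ramp a n x \<le> 1"
  unfolding ramp_def by auto

lemma ramp_at_endpoints:
  assumes "0 \<le> a" "a \<le> 1"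
  shows "ramp a n 0 = 0 \<and> ramp a n 1 = 0"
proof -
  have "real (Suc n) * (0 - a) \<le> 0" "real (Suc n) * (1 - a) \<ge> 0"
    using assms by (simp_all add: mult_nonneg_nonpos)
  then show ?thesis unfolding ramp_def by (simp add: min_def max_def)
qed

lemma ramp_tendsto_indicator:
  assumes x: "x \<in> {0..1}" and a: "0 \<le> a"
  shows "(\<lambda>n. ramp a n x) \<longlonglongrightarrow> indicator {a<..<1} x"
proof (cases "a < x \<and> x < 1")
  case True
  obtain N :: nat where N: "1 / (x - a) + 1 / (1 - x) < real N"
    using reals_Archimedean2 by blast
  have "ramp a n x = 1" if "N \<le> n" for n
  proof -
    have "1 / (x - a) < real (Suc n)" "1 / (1 - x) < real (Suc n)"
      using N True that by (smt (verit, ccfv_threshold) divide_pos_pos of_nat_Suc of_nat_mono)+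
    then have "1 < real (Suc n) * (x - a)" "1 < real (Suc n) * (1 - x)"
      using True by (simp_all add: pos_divide_less_eq mult.commute)
    then show ?thesis unfolding ramp_def by simp
  qed
  then have "eventually (\<lambda>n. ramp a n x = 1) sequentially"
    by (rule eventually_sequentiallyI)
  then show ?thesis using True by (simp add: tendsto_eventually)
next
  case False
  have "ramp a n x = 0" for n
  proof (cases "x \<le> a")
    case True
    then have "real (Suc n) * (x - a) \<le> 0" by (simp add: mult_nonneg_nonpos)
    then show ?thesis unfolding ramp_def by simp
  next
    case False
    with \<open>\<not> (a < x \<and> x < 1)\<close> x have "x = 1" by auto
    then show ?thesis unfolding ramp_def using a by simp
  qed
  then show ?thesis using False by simp
qed

lemma integral_times_indicator_eq_0:
  fixes f :: "real \<Rightarrow> real"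
  assumes f: "f absolutely_integrable_on {0..1}" and z: "\<And>k. fcoeff f k = 0"
    and a: "0 \<le> a" "a \<le> 1"
  shows "((\<lambda>x. f x * indicator {a<..<1} x) has_integral 0) {0..1}"
proof -
  have int_abs: "(\<lambda>x. \<bar>f x\<bar>) integrable_on {0..1}"
    using f by (simp add: absolutely_integrable_on_def)
  have int_ramp: "(\<lambda>x. f x * ramp a n x) integrable_on {0..1}" for n
    by (rule integrable_times_continuous[OF f continuous_on_ramp])
  have bound: "norm (f x * ramp a n x) \<le> \<bar>f x\<bar>" if "x \<in> {0..1}" for n x
    using ramp_bounds[of a n x] by (simp add: abs_mult mult_left_le)
  have lim: "(\<lambda>n. f x * ramp a n x) \<longlonglongrightarrow> f x * indicator {a<..<1} x" if "x \<in> {0..1}" for x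
    by (intro tendsto_mult tendsto_const ramp_tendsto_indicator[OF that a(1)])
  have "integral {0..1} (\<lambda>x. f x * ramp a n x) = 0" for n
    using ramp_at_endpoints[OF a, of n]
    by (intro integral_times_periodic_continuous_eq_0[OF f z continuous_on_ramp]) simp
  moreover have "(\<lambda>n. integral {0..1} (\<lambda>x. f x * ramp a n x))
      \<longlonglongrightarrow> integral {0..1} (\<lambda>x. f x * indicator {a<..<1} x)"
    by (rule dominated_convergence(2)[OF int_ramp int_abs bound lim])
  ultimately have "integral {0..1} (\<lambda>x. f x * indicator {a<..<1} x) = 0"
    using LIMSEQ_unique by (simp add: LIMSEQ_const_iff)
  with dominated_convergence(1)[OF int_ramp int_abs bound lim] show ?thesis
    by (simp add: has_integral_integral)
qed

lemma emeasure_density_eq_integral: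
  fixes Q :: "'a \<Rightarrow> real"
  assumes "Q \<in> borel_measurable M" "\<And>x. Q x \<ge> 0"
    and "integrable M (\<lambda>x. Q x * indicator A x)" "A \<in> sets M"
  shows "emeasure (density M (\<lambda>x. ennreal (Q x))) A = ennreal (LINT x|M. Q x * indicator A x)"
proof -
  have "emeasure (density M (\<lambda>x. ennreal (Q x))) A = (\<integral>\<^sup>+x. ennreal (Q x) * indicator A x \<partial>M)"
    using assms by (subst emeasure_density) auto
  also have "\<dots> = (\<integral>\<^sup>+x. ennreal (Q x * indicator A x) \<partial>M)"
    by (intro nn_integral_cong) (auto split: split_indicator)
  also have "\<dots> = ennreal (LINT x|M. Q x * indicator A x)"
    using assms by (intro nn_integral_eq_integral) (auto split: split_indicator)
  finally show ?thesis .
qed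

text \<open>The positive and negative parts of \<open>G\<close> are densities of two measures that agree on all
  half-lines, hence coincide.\<close>
lemma AE_eq_0_if_integrals_greaterThan_eq_0:
  fixes G :: "real \<Rightarrow> real"
  assumes [measurable]: "G \<in> borel_measurable borel"
    and G: "integrable lborel G"
    and z: "\<And>a. (LINT x|lborel. indicator {a<..} x * G x) = 0"
  shows "AE x in lborel. G x = 0"
proof -
  define P where "P x = max 0 (G x)" for x
  define N where "N x = max 0 (- G x)" for x
  have [measurable]: "P \<in> borel_measurable borel" "N \<in> borel_measurable borel"
    unfolding P_def N_def by measurable
  have "integrable lborel P" "integrable lborel N"
    unfolding P_def N_def by (intro integrable_max integrable_minus G integrable_zero)+
  then have PA: "integrable lborel (\<lambda>x. P x * indicator A x)"
    and NA: "integrable lborel (\<lambda>x. N x * indicator A x)" if "A \<in> sets borel" for A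
    using integrable_mult_indicator[of A lborel P] integrable_mult_indicator[of A lborel N] that
    by (simp_all add: mult.commute)
  have "density lborel (\<lambda>x. ennreal (P x)) = density lborel (\<lambda>x. ennreal (N x))"
  proof (rule measure_eqI_lessThan)
    fix a
    have "(LINT x|lborel. P x * indicator {a<..} x) - (LINT x|lborel. N x * indicator {a<..} x)
        = (LINT x|lborel. indicator {a<..} x * G x)"
      by (subst Bochner_Integration.integral_diff[OF PA NA, symmetric])
        (auto intro!: Bochner_Integration.integral_cong simp: P_def N_def split: split_indicator)
    then show "emeasure (density lborel (\<lambda>x. ennreal (P x))) {a<..} =
        emeasure (density lborel (\<lambda>x. ennreal (N x))) {a<..}"
      using z[of a] PA NA by (simp add: emeasure_density_eq_integral P_def N_def)
    show "emeasure (density lborel (\<lambda>x. ennreal (P x))) {a<..} < \<infinity>"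
      using PA by (simp add: emeasure_density_eq_integral P_def)
  qed simp_all
  then have "AE x in lborel. ennreal (P x) = ennreal (N x)"
    by (intro sigma_finite_measure.density_unique[OF sigma_finite_lborel]) auto
  then show ?thesis
    by eventually_elim (auto simp: P_def N_def max_def split: if_splits)
qed

lemma negligible_if_integrals_greaterThan_eq_0:
  fixes F :: "real \<Rightarrow> real"
  assumes F: "integrable lebesgue F"
    and z: "\<And>a. ((\<lambda>x. indicator {a<..} x * F x) has_integral 0) UNIV"
  shows "negligible {x. F x \<noteq> 0}"
proof -
  obtain G where G [measurable]: "G \<in> borel_measurable lborel" and FG: "AE x in lborel. F x = G x"
    using completion_ex_borel_measurable_real[of F lborel] F
    by (auto simp: borel_measurable_integrable)
  obtain N where N: "negligible N" "\<And>x. x \<notin> N \<Longrightarrow> F x = G x"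
    using AE_completion[OF FG] by (force simp: eventually_ae_filter_negligible)
  have "integrable lebesgue G"
    by (rule integrable_cong_AE_imp[OF F measurable_completion[OF G] AE_completion[OF FG]])
  then have G_int: "integrable lborel G"
    using G by (simp add: integrable_completion)
  have Gz: "(LINT x|lborel. indicator {a<..} x * G x) = 0" for a
  proof -
    have "((\<lambda>x. indicator {a<..} x * G x) has_integral 0) UNIV"
      by (rule has_integral_spike[OF N(1) _ z[of a]]) (simp add: N(2))
    moreover have "integrable lborel (\<lambda>x. indicator {a<..} x * G x)"
      using integrable_mult_indicator[of "{a<..}" lborel G] G_int by simp
    ultimately show ?thesis
      using has_integral_integral_lborel has_integral_unique by blast
  qed
  have "AE x in lborel. G x = 0"
    by (rule AE_eq_0_if_integrals_greaterThan_eq_0[OF _ G_int Gz]) simp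
  with FG have "AE x in lborel. F x = 0" by eventually_elim simp
  then have "AE x in lebesgue. F x = 0" by (rule AE_completion)
  then obtain N' where "negligible N'" "{x. F x \<noteq> 0} \<subseteq> N'"
    by (auto simp: eventually_ae_filter_negligible)
  then show ?thesis by (rule negligible_subset)
qed

lemma fourier_uniqueness:
  fixes f :: "real \<Rightarrow> real"
  assumes f: "f absolutely_integrable_on {0..1}" and z: "\<And>k. fcoeff f k = 0"
  shows "negligible {x\<in>{0..1}. f x \<noteq> 0}"
proof -
  define F where "F x = indicator {0..1} x * f x" for x :: real
  have "((\<lambda>x. indicator {a<..} x * F x) has_integral 0) UNIV" for a
  proof -
    define b where "b = max 0 (min 1 a)"
    have "((\<lambda>x. f x * indicator {b<..<1} x) has_integral 0) {0..1}"
      by (rule integral_times_indicator_eq_0[OF f z]) (auto simp: b_def)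
    then have "((\<lambda>x. if x \<in> {0..1} then f x * indicator {b<..<1} x else 0) has_integral 0) UNIV"
      by (simp only: has_integral_restrict_UNIV)
    then show ?thesis
    proof (rule has_integral_spike[rotated 2])
      show "negligible {0, 1::real}" by simp
    qed (auto simp: F_def b_def indicator_def)
  qed
  moreover have "integrable lebesgue F"
    using f unfolding F_def[abs_def] set_integrable_def by simp
  ultimately have "negligible {x. F x \<noteq> 0}"
    by (intro negligible_if_integrals_greaterThan_eq_0)
  then show ?thesis
    by (rule negligible_subset) (auto simp: F_def)
qed

section \<open>Absolutely convergent Fourier series\<close>

definition fourier_series :: "(int \<Rightarrow> complex) \<Rightarrow> real \<Rightarrow> complex" where
  "fourier_series c x = (\<Sum>\<^sub>\<infinity>k. c k * ek k x)"

definition hermitian_coeffs :: "(int \<Rightarrow> complex) \<Rightarrow> bool" where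
  "hermitian_coeffs c \<longleftrightarrow> (\<forall>k. c (-k) = cnj (c k))"

lemma hermitian_coeffs_fcoeff: "hermitian_coeffs (fcoeff f)"
  unfolding hermitian_coeffs_def by (simp add: fcoeff_uminus)

lemma uniform_limit_fourier_series:
  assumes "(\<lambda>k. norm (c k)) summable_on UNIV"
  shows "uniform_limit S (\<lambda>F x. \<Sum>k\<in>F. c k * ek k x) (fourier_series c) (finite_subsets_at_top UNIV)"
  unfolding fourier_series_def
  by (rule Weierstrass_m_test_general[OF _ assms]) (simp add: norm_mult)

lemma continuous_on_fourier_series:
  assumes "(\<lambda>k. norm (c k)) summable_on UNIV"
  shows "continuous_on S (fourier_series c)"
proof (rule uniform_limit_theorem[OF _ uniform_limit_fourier_series[OF assms]])
  show "\<forall>\<^sub>F F in finite_subsets_at_top UNIV. continuous_on S (\<lambda>x. \<Sum>k\<in>F. c k * ek k x)"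
    by (intro always_eventually allI continuous_intros)
qed (rule finite_subsets_at_top_neq_bot)

lemma fourier_series_has_sum:
  assumes "(\<lambda>k. norm (c k)) summable_on UNIV"
  shows "((\<lambda>k. c k * ek k x) has_sum fourier_series c x) UNIV"
proof -
  have "(\<lambda>k. norm (c k * ek k x)) summable_on UNIV" using assms by (simp add: norm_mult)
  then show ?thesis unfolding fourier_series_def by (rule has_sum_infsum[OF abs_summable_summable])
qed

lemma norm_fourier_series_le:
  assumes "(\<lambda>k. norm (c k)) summable_on UNIV"
  shows "norm (fourier_series c x) \<le> (\<Sum>\<^sub>\<infinity>k. norm (c k))"
proof -
  have "(\<lambda>k. norm (c k * ek k x)) summable_on UNIV" using assms by (simp add: norm_mult)
  then have "norm (fourier_series c x) \<le> (\<Sum>\<^sub>\<infinity>k. norm (c k * ek k x))"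
    unfolding fourier_series_def by (rule norm_infsum_bound)
  then show ?thesis by (simp add: norm_mult)
qed

lemma fourier_series_periodic: "fourier_series c (x + 1) = fourier_series c x"
  unfolding fourier_series_def by (simp add: ek_periodic)

lemma fourier_series_at_1: "fourier_series c 1 = fourier_series c 0"
  unfolding fourier_series_def by simp

lemma Re_fourier_series_eq:
  assumes "hermitian_coeffs c"
  shows "complex_of_real (Re (fourier_series c x)) = fourier_series c x"
proof -
  have "cnj (fourier_series c x) = (\<Sum>\<^sub>\<infinity>k. c (-k) * ek (-k) x)"
    unfolding fourier_series_def infsum_cnj[symmetric]
    using assms by (simp add: hermitian_coeffs_def cnj_ek)
  also have "\<dots> = fourier_series c x"
    unfolding fourier_series_def
    by (rule infsum_reindex_bij_betw[of uminus UNIV UNIV "\<lambda>k. c k * ek k x"])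
      (auto intro!: bij_betwI[of _ _ _ uminus])
  finally show ?thesis by (metis Reals_cnj_iff complex_is_Real_iff of_real_Re)
qed

lemma integral_times_fourier_series:
  fixes v :: "real \<Rightarrow> complex"
  assumes c: "(\<lambda>k. norm (c k)) summable_on UNIV" and v: "continuous_on {a..b} v"
  shows "((\<lambda>k. c k * integral {a..b} (\<lambda>x. v x * ek k x)) has_sum
           integral {a..b} (\<lambda>x. v x * fourier_series c x)) UNIV"
proof -
  have "bounded (v ` {a..b})" "bounded (fourier_series c ` {a..b})"
    using v continuous_on_fourier_series[OF c]
    by (auto intro!: compact_imp_bounded compact_continuous_image)
  then have "uniform_limit {a..b} (\<lambda>F x. v x * (\<Sum>k\<in>F. c k * ek k x))
      (\<lambda>x. v x * fourier_series c x) (finite_subsets_at_top UNIV)"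
    by (intro uniform_lim_mult uniform_limit_const uniform_limit_fourier_series c)
  then obtain I J where I: "\<And>F. ((\<lambda>x. v x * (\<Sum>k\<in>F. c k * ek k x)) has_integral I F) {a..b}"
    and J: "((\<lambda>x. v x * fourier_series c x) has_integral J) {a..b}"
    and lim: "(I \<longlongrightarrow> J) (finite_subsets_at_top UNIV)"
    by (rule uniform_limit_integral) (auto intro!: continuous_intros v)
  have I_eq: "I F = (\<Sum>k\<in>F. c k * integral {a..b} (\<lambda>x. v x * ek k x))" if "finite F" for F
  proof -
    have "(\<lambda>x. v x * ek k x) integrable_on {a..b}" for k
      by (intro integrable_continuous_interval continuous_intros v)
    then have "((\<lambda>x. \<Sum>k\<in>F. c k * (v x * ek k x)) has_integral
        (\<Sum>k\<in>F. c k * integral {a..b} (\<lambda>x. v x * ek k x))) {a..b}"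
      by (intro has_integral_sum[OF that] has_integral_mult_right integrable_integral)
    with I[of F] show ?thesis
      by (simp add: sum_distrib_left algebra_simps has_integral_unique)
  qed
  have "eventually (\<lambda>F. I F = (\<Sum>k\<in>F. c k * integral {a..b} (\<lambda>x. v x * ek k x)))
      (finite_subsets_at_top UNIV)"
    by (rule eventually_finite_subsets_at_top_weakI) (rule I_eq)
  from Lim_transform_eventually[OF lim this] show ?thesis
    unfolding has_sum_def integral_unique[OF J] .
qed

lemma fcoeff_Re_fourier_series:
  assumes c: "(\<lambda>k. norm (c k)) summable_on UNIV" and h: "hermitian_coeffs c"
  shows "fcoeff (\<lambda>x. Re (fourier_series c x)) k = c k"
proof -
  have "((\<lambda>j. c j * integral {0..1} (\<lambda>x. ek (-k) x * ek j x)) has_sum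
      fcoeff (\<lambda>x. Re (fourier_series c x)) k) UNIV"
    unfolding fcoeff_eq_integral_ek Re_fourier_series_eq[OF h]
    by (rule integral_times_fourier_series[OF c continuous_on_ek])
  moreover have "((\<lambda>j. c j * integral {0..1} (\<lambda>x. ek (-k) x * ek j x)) has_sum c k) UNIV"
    by (rule has_sum_finite_neutralI[of "{k}"]) (auto simp: integral_ek_orthonormal)
  ultimately show ?thesis by (rule has_sum_unique)
qed

lemma in_L2T_Re_fourier_series:
  assumes "(\<lambda>k. norm (c k)) summable_on UNIV"
  shows "in_L2T (\<lambda>x. Re (fourier_series c x))"
proof -
  have cont: "continuous_on {0..1} (\<lambda>x. Re (fourier_series c x))"
    by (intro continuous_intros continuous_on_fourier_series assms)
  then have "(\<lambda>x. Re (fourier_series c x)) measurable_on {0..1}"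
    by (simp add: measurable_on_iff_borel_measurable continuous_imp_measurable_on_sets_lebesgue)
  moreover have "(\<lambda>x. (Re (fourier_series c x))^2) integrable_on {0..1}"
    by (intro integrable_continuous_interval continuous_intros cont)
  ultimately show ?thesis
    unfolding in_L2T_def periodic1_def by (simp add: fourier_series_periodic)
qed

definition deriv_coeffs :: "(int \<Rightarrow> complex) \<Rightarrow> int \<Rightarrow> complex" where
  "deriv_coeffs c k = \<i> * complex_of_real (2 * pi * real_of_int k) * c k"

lemma hermitian_deriv_coeffs: "hermitian_coeffs c \<Longrightarrow> hermitian_coeffs (deriv_coeffs c)"
  unfolding hermitian_coeffs_def deriv_coeffs_def by simp

lemma integral_fourier_series_deriv_coeffs:
  assumes c: "(\<lambda>k. norm (c k)) summable_on UNIV" and c': "(\<lambda>k. norm (deriv_coeffs c k)) summable_on UNIV"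
    and "0 \<le> y"
  shows "integral {0..y} (fourier_series (deriv_coeffs c)) = fourier_series c y - fourier_series c 0"
proof -
  have termwise: "deriv_coeffs c k * integral {0..y} (ek k) = c k * ek k y - c k * ek k 0" for k
  proof (cases "k = 0")
    case False
    define D where "D = \<i> * complex_of_real (2 * pi * real_of_int k)"
    have "D \<noteq> 0" using False by (simp add: D_def)
    moreover have "integral {0..y} (ek k) = (ek k y - ek k 0) / D"
      using ek_has_integral[OF False \<open>0 \<le> y\<close>] unfolding D_def by (rule integral_unique)
    ultimately have "D * integral {0..y} (ek k) = ek k y - ek k 0" by simp
    moreover have "deriv_coeffs c k * integral {0..y} (ek k) = c k * (D * integral {0..y} (ek k))"
      by (simp add: deriv_coeffs_def D_def)
    ultimately show ?thesis by (simp add: right_diff_distrib)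
  qed (simp add: deriv_coeffs_def)
  have "((\<lambda>k. deriv_coeffs c k * integral {0..y} (\<lambda>x. 1 * ek k x)) has_sum
      integral {0..y} (\<lambda>x. 1 * fourier_series (deriv_coeffs c) x)) UNIV"
    by (rule integral_times_fourier_series[OF c' continuous_on_const])
  then have "((\<lambda>k. c k * ek k y - c k * ek k 0) has_sum
      integral {0..y} (fourier_series (deriv_coeffs c))) UNIV"
    by (simp add: termwise)
  moreover have "((\<lambda>k. c k * ek k y - c k * ek k 0) has_sum (fourier_series c y - fourier_series c 0)) UNIV"
  proof -
    have "((\<lambda>k. - (c k * ek k 0)) has_sum - fourier_series c 0) UNIV"
      by (rule has_sum_uminusI[OF fourier_series_has_sum[OF c]])
    from has_sum_add[OF fourier_series_has_sum[OF c] this] show ?thesis by simp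
  qed
  ultimately show ?thesis by (rule has_sum_unique)
qed

lemma fourier_series_has_vector_derivative:
  assumes c: "(\<lambda>k. norm (c k)) summable_on UNIV"
    and c': "(\<lambda>k. norm (deriv_coeffs c k)) summable_on UNIV"
    and x: "x \<in> {0..1}"
  shows "(fourier_series c has_vector_derivative fourier_series (deriv_coeffs c) x) (at x within {0..1})"
proof -
  have "((\<lambda>y. integral {0..y} (fourier_series (deriv_coeffs c)))
      has_vector_derivative fourier_series (deriv_coeffs c) x) (at x within {0..1})"
    by (rule integral_has_vector_derivative[OF continuous_on_fourier_series[OF c'] x])
  then have "((\<lambda>y. fourier_series c 0 + integral {0..y} (fourier_series (deriv_coeffs c)))
      has_vector_derivative 0 + fourier_series (deriv_coeffs c) x) (at x within {0..1})"
    by (intro has_vector_derivative_add has_vector_derivative_const)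
  then have "((\<lambda>y. fourier_series c 0 + integral {0..y} (fourier_series (deriv_coeffs c)))
      has_vector_derivative fourier_series (deriv_coeffs c) x) (at x within {0..1})"
    by simp
  then show ?thesis
    by (rule has_vector_derivative_transform[OF x, rotated])
      (simp add: integral_fourier_series_deriv_coeffs[OF c c'])
qed

lemma sob_weight_pos: "sob_weight r k > 0"
proof -
  have "1 + (2 * pi * real_of_int k)^2 \<noteq> 0"
    using zero_le_power2[of "2 * pi * real_of_int k"] by linarith
  then show ?thesis unfolding sob_weight_def by simp
qed

lemma sob_weight_mono: "r' \<le> r \<Longrightarrow> sob_weight r' k \<le> sob_weight r k"
  unfolding sob_weight_def by (rule powr_mono) simp_all

lemma sob_weight_minus_1: "sob_weight r k = sob_weight (r - 1) k * (1 + (2 * pi * real_of_int k)^2)"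
proof -
  have "0 \<le> 1 + (2 * pi * real_of_int k)^2" by simp
  have "sob_weight r k = (1 + (2 * pi * real_of_int k)^2) powr ((r - 1) + 1)"
    unfolding sob_weight_def by simp
  also have "\<dots> = sob_weight (r - 1) k * (1 + (2 * pi * real_of_int k)^2)"
    unfolding sob_weight_def powr_add using \<open>0 \<le> _\<close> by simp
  finally show ?thesis .
qed

lemma summable_on_int_if_even:
  fixes h :: "int \<Rightarrow> real"
  assumes "(\<lambda>n. h (int n)) summable_on UNIV" and "\<And>k. h (-k) = h k"
  shows "h summable_on UNIV"
proof -
  have "h summable_on range int"
    using assms(1) by (subst summable_on_reindex) (auto simp: o_def)
  moreover have "h summable_on range (\<lambda>n. - int n)"
    using assms by (subst summable_on_reindex) (auto simp: o_def inj_on_def)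
  moreover have "range int \<union> range (\<lambda>n. - int n) = (UNIV :: int set)"
    by (auto intro: range_eqI[of _ _ "nat _"] simp: image_iff) (metis nat_0_le minus_minus nonneg_int_cases neg_0_le_iff_le linorder_linear)
  ultimately show ?thesis using summable_on_union by metis
qed

lemma inverse_sob_weight_le_powr:
  assumes "r \<ge> 0" and "n \<ge> 1"
  shows "1 / sob_weight r (int n) \<le> real n powr (- 2 * r)"
proof -
  have "real n powr (2 * r) = ((real n)^2) powr r"
    using assms(2) by (simp add: powr_powr[symmetric] powr_realpow)
  also have "\<dots> \<le> sob_weight r (int n)"
  proof -
    have "1 \<le> 2 * pi" using pi_gt3 by simp
    then have "1 \<le> (2 * pi)^2" by (rule one_le_power)
    then have "1 * (real n)^2 \<le> (2 * pi)^2 * (real n)^2" by (rule mult_right_mono) simp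
    then have "(real n)^2 \<le> 1 + (2 * pi * real_of_int (int n))^2"
      by (simp add: power_mult_distrib)
    then show ?thesis unfolding sob_weight_def using assms(1) by (intro powr_mono2) auto
  qed
  finally show ?thesis
    using assms by (simp add: powr_minus_divide divide_simps sob_weight_pos)
qed

lemma summable_on_inverse_sob_weight:
  assumes "r > 1/2"
  shows "(\<lambda>k. 1 / sob_weight r k) summable_on UNIV"
proof (rule summable_on_int_if_even)
  have "summable (\<lambda>n. 1 / sob_weight r (int n))"
  proof (rule summable_comparison_test'[of "\<lambda>n. real n powr (- 2 * r)" 1])
    show "summable (\<lambda>n. real n powr (- 2 * r))"
      using assms by (simp add: summable_real_powr_iff)
    show "norm (1 / sob_weight r (int n)) \<le> real n powr (- 2 * r)" if "1 \<le> n" for n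
      using inverse_sob_weight_le_powr[OF _ that] assms sob_weight_pos[of r "int n"] by simp
  qed
  then show "(\<lambda>n. 1 / sob_weight r (int n)) summable_on UNIV"
    by (rule summable_nonneg_imp_summable_on) (simp add: less_imp_le[OF sob_weight_pos])
qed (simp add: sob_weight_def)

definition sobolev_const :: "real \<Rightarrow> real" where
  "sobolev_const r = (\<Sum>\<^sub>\<infinity>k. 1 / sob_weight r k)"

lemma sobolev_const_nonneg: "sobolev_const r \<ge> 0"
  unfolding sobolev_const_def by (rule infsum_nonneg) (simp add: less_imp_le[OF sob_weight_pos])

lemma weighted_Cauchy_Schwarz_infsum:
  fixes w d :: "'a \<Rightarrow> real"
  assumes w: "\<And>k. w k > 0" and W: "(\<lambda>k. 1 / w k) summable_on A"
    and D: "(\<lambda>k. w k * (d k)^2) summable_on A"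
  shows "(\<lambda>k. \<bar>d k\<bar>) summable_on A"
    and "(\<Sum>\<^sub>\<infinity>k\<in>A. \<bar>d k\<bar>) \<le> sqrt (\<Sum>\<^sub>\<infinity>k\<in>A. 1 / w k) * sqrt (\<Sum>\<^sub>\<infinity>k\<in>A. w k * (d k)^2)"
proof -
  have nonneg: "(\<Sum>\<^sub>\<infinity>k\<in>A. 1 / w k) \<ge> 0" "(\<Sum>\<^sub>\<infinity>k\<in>A. w k * (d k)^2) \<ge> 0"
    using w by (auto intro!: infsum_nonneg simp: less_imp_le)
  have partial: "(\<Sum>k\<in>F. \<bar>d k\<bar>) \<le> sqrt (\<Sum>\<^sub>\<infinity>k\<in>A. 1 / w k) * sqrt (\<Sum>\<^sub>\<infinity>k\<in>A. w k * (d k)^2)"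
    if "finite F" "F \<subseteq> A" for F
  proof -
    have "(\<Sum>k\<in>F. sqrt (1 / w k) * (sqrt (w k) * \<bar>d k\<bar>))^2
        \<le> (\<Sum>k\<in>F. (sqrt (1 / w k))^2) * (\<Sum>k\<in>F. (sqrt (w k) * \<bar>d k\<bar>)^2)"
      by (rule Cauchy_Schwarz_ineq_sum)
    moreover have "sqrt (1 / w k) * (sqrt (w k) * \<bar>d k\<bar>) = \<bar>d k\<bar>" for k
      using w[of k] by (simp add: real_sqrt_divide field_simps)
    moreover have "(sqrt (1 / w k))^2 = 1 / w k" "(sqrt (w k) * \<bar>d k\<bar>)^2 = w k * (d k)^2" for k
      using w[of k] by (simp_all add: power_mult_distrib less_imp_le)
    ultimately have "(\<Sum>k\<in>F. \<bar>d k\<bar>)^2 \<le> (\<Sum>k\<in>F. 1 / w k) * (\<Sum>k\<in>F. w k * (d k)^2)"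
      by simp
    then have "(\<Sum>k\<in>F. \<bar>d k\<bar>) \<le> sqrt (\<Sum>k\<in>F. 1 / w k) * sqrt (\<Sum>k\<in>F. w k * (d k)^2)"
      by (simp add: real_le_rsqrt real_sqrt_mult[symmetric])
    also have "\<dots> \<le> sqrt (\<Sum>\<^sub>\<infinity>k\<in>A. 1 / w k) * sqrt (\<Sum>\<^sub>\<infinity>k\<in>A. w k * (d k)^2)"
      using w that nonneg
      by (intro mult_mono real_sqrt_le_mono finite_sum_le_infsum W D)
        (auto simp: less_imp_le intro: sum_nonneg)
    finally show ?thesis .
  qed
  show "(\<lambda>k. \<bar>d k\<bar>) summable_on A"
    by (rule nonneg_bdd_above_summable_on) (use partial in \<open>auto simp: bdd_above_def\<close>)
  then show "(\<Sum>\<^sub>\<infinity>k\<in>A. \<bar>d k\<bar>) \<le> sqrt (\<Sum>\<^sub>\<infinity>k\<in>A. 1 / w k) * sqrt (\<Sum>\<^sub>\<infinity>k\<in>A. w k * (d k)^2)"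
    by (rule infsum_le_finite_sums) (rule partial)
qed

section \<open>Sobolev spaces on the torus\<close>

lemma Hs_norm_nonneg: "Hs_norm r f \<ge> 0"
  unfolding Hs_norm_def
  by (intro real_sqrt_ge_zero infsum_nonneg) (simp add: less_imp_le[OF sob_weight_pos])

lemma in_Hs_abs_summable_fcoeff:
  assumes "r > 1/2" and "in_Hs r f"
  shows "(\<lambda>k. norm (fcoeff f k)) summable_on UNIV"
    and "(\<Sum>\<^sub>\<infinity>k. norm (fcoeff f k)) \<le> sqrt (sobolev_const r) * Hs_norm r f"
  using weighted_Cauchy_Schwarz_infsum[OF sob_weight_pos summable_on_inverse_sob_weight[OF assms(1)],
      of "\<lambda>k. norm (fcoeff f k)"] assms(2)
  unfolding in_Hs_def Hs_norm_def sobolev_const_def by auto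

lemma fcoeff_linear:
  assumes f: "f absolutely_integrable_on {0..1}" and g: "g absolutely_integrable_on {0..1}"
  shows "fcoeff (\<lambda>x. a * f x + b * g x) k = complex_of_real a * fcoeff f k + complex_of_real b * fcoeff g k"
proof -
  have "fcoeff (\<lambda>x. a * f x + b * g x) k =
    integral {0..1} (\<lambda>x. complex_of_real a * (complex_of_real (f x) * cis (- 2 * pi * real_of_int k * x)) +
                         complex_of_real b * (complex_of_real (g x) * cis (- 2 * pi * real_of_int k * x)))"
    unfolding fcoeff_def by (rule integral_cong) (simp add: algebra_simps)
  also have "\<dots> = complex_of_real a * fcoeff f k + complex_of_real b * fcoeff g k"
    unfolding fcoeff_def
    by (simp only: integral_add integrable_on_mult_right fcoeff_integrable[OF f] fcoeff_integrable[OF g]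
        integral_mult_right)
  finally show ?thesis .
qed

lemma power2_sum_le:
  fixes x y :: real
  shows "(x + y)^2 \<le> 2 * x^2 + 2 * y^2"
  using zero_le_power2[of "x - y"] by (simp add: power2_sum power2_diff)

lemma in_L2T_linear:
  assumes f: "in_L2T f" and g: "in_L2T g"
  shows "in_L2T (\<lambda>x. a * f x + b * g x)"
proof -
  have fm: "f measurable_on {0..1}" and gm: "g measurable_on {0..1}"
    and fs: "(\<lambda>x. (f x)^2) integrable_on {0..1}" and gs: "(\<lambda>x. (g x)^2) integrable_on {0..1}"
    using f g unfolding in_L2T_def by auto
  have hm: "(\<lambda>x. a * f x + b * g x) measurable_on {0..1}"
    by (intro measurable_on_add measurable_on_cmul fm gm)
  have "(\<lambda>x. (a * f x + b * g x)^2) integrable_on {0..1}"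
  proof (rule measurable_bounded_by_integrable_imp_integrable)
    show "(\<lambda>x. (a * f x + b * g x)^2) \<in> borel_measurable (lebesgue_on {0..1})"
      using measurable_on_scaleR[OF hm hm]
      by (simp add: measurable_on_iff_borel_measurable power2_eq_square)
    show "(\<lambda>x. 2 * a^2 * (f x)^2 + 2 * b^2 * (g x)^2) integrable_on {0..1}"
      by (intro integrable_add integrable_on_mult_right fs gs)
    show "norm ((a * f x + b * g x)^2) \<le> 2 * a^2 * (f x)^2 + 2 * b^2 * (g x)^2" for x
      using power2_sum_le[of "a * f x" "b * g x"] by (simp add: power_mult_distrib)
  qed simp
  with f g hm show ?thesis unfolding in_L2T_def periodic1_def by simp
qed

lemma in_Hs_linear:
  assumes f: "in_Hs r f" and g: "in_Hs r g"
  shows "in_Hs r (\<lambda>x. a * f x + b * g x)"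
proof -
  have fl: "in_L2T f" and gl: "in_L2T g"
    and fs: "(\<lambda>k. sob_weight r k * (cmod (fcoeff f k))^2) summable_on UNIV"
    and gs: "(\<lambda>k. sob_weight r k * (cmod (fcoeff g k))^2) summable_on UNIV"
    using f g unfolding in_Hs_def by auto
  have "(\<lambda>k. sob_weight r k * (cmod (fcoeff (\<lambda>x. a * f x + b * g x) k))^2) summable_on UNIV"
  proof (rule summable_on_comparison_test)
    show "(\<lambda>k. 2 * a^2 * (sob_weight r k * (cmod (fcoeff f k))^2)
        + 2 * b^2 * (sob_weight r k * (cmod (fcoeff g k))^2)) summable_on UNIV"
      by (intro summable_on_add summable_on_cmult_right fs gs)
    fix k
    have w: "sob_weight r k > 0" by (rule sob_weight_pos)
    have "(cmod (complex_of_real a * fcoeff f k + complex_of_real b * fcoeff g k))^2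
        \<le> (cmod (complex_of_real a * fcoeff f k) + cmod (complex_of_real b * fcoeff g k))^2"
      by (intro power_mono norm_triangle_ineq) simp
    also have "\<dots> \<le> 2 * (cmod (complex_of_real a * fcoeff f k))^2 + 2 * (cmod (complex_of_real b * fcoeff g k))^2"
      by (rule power2_sum_le)
    also have "\<dots> = 2 * a^2 * (cmod (fcoeff f k))^2 + 2 * b^2 * (cmod (fcoeff g k))^2"
      by (simp add: norm_mult power_mult_distrib)
    finally have "sob_weight r k * (cmod (fcoeff (\<lambda>x. a * f x + b * g x) k))^2 \<le>
        sob_weight r k * (2 * a^2 * (cmod (fcoeff f k))^2 + 2 * b^2 * (cmod (fcoeff g k))^2)"
      using w by (simp add: fcoeff_linear in_L2T_absolutely_integrable fl gl)
    then show "sob_weight r k * (cmod (fcoeff (\<lambda>x. a * f x + b * g x) k))^2 \<le>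
        2 * a^2 * (sob_weight r k * (cmod (fcoeff f k))^2) + 2 * b^2 * (sob_weight r k * (cmod (fcoeff g k))^2)"
      by (simp add: algebra_simps)
  qed (simp add: less_imp_le[OF sob_weight_pos])
  then show ?thesis unfolding in_Hs_def using in_L2T_linear[OF fl gl] by simp
qed

lemma in_Hs_mono:
  assumes f: "in_Hs r f" and "r' \<le> r"
  shows "in_Hs r' f" and "Hs_norm r' f \<le> Hs_norm r f"
proof -
  have fs: "(\<lambda>k. sob_weight r k * (cmod (fcoeff f k))^2) summable_on UNIV"
    using f unfolding in_Hs_def by auto
  have le: "sob_weight r' k * (cmod (fcoeff f k))^2 \<le> sob_weight r k * (cmod (fcoeff f k))^2" for k
    by (rule mult_right_mono[OF sob_weight_mono[OF \<open>r' \<le> r\<close>]]) simp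
  have s: "(\<lambda>k. sob_weight r' k * (cmod (fcoeff f k))^2) summable_on UNIV"
    by (rule summable_on_comparison_test[OF fs le]) (simp add: less_imp_le[OF sob_weight_pos])
  then show "in_Hs r' f" using f unfolding in_Hs_def by simp
  show "Hs_norm r' f \<le> Hs_norm r f"
    unfolding Hs_norm_def by (intro real_sqrt_le_mono infsum_mono[OF s fs le])
qed

lemma negligible_neq_Re_fourier_series_fcoeff:
  assumes f: "in_L2T f" and c: "(\<lambda>k. norm (fcoeff f k)) summable_on UNIV"
  shows "negligible {x\<in>{0..1}. f x \<noteq> Re (fourier_series (fcoeff f) x)}"
proof -
  define g where "g x = 1 * f x + (-1) * Re (fourier_series (fcoeff f) x)" for x
  have W: "in_L2T (\<lambda>x. Re (fourier_series (fcoeff f) x))" by (rule in_L2T_Re_fourier_series[OF c])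
  have "fcoeff g k = 0" for k
    unfolding g_def
    by (subst fcoeff_linear[OF in_L2T_absolutely_integrable[OF f] in_L2T_absolutely_integrable[OF W]])
      (simp add: fcoeff_Re_fourier_series[OF c hermitian_coeffs_fcoeff])
  then have "negligible {x\<in>{0..1}. g x \<noteq> 0}"
    unfolding g_def by (intro fourier_uniqueness in_L2T_absolutely_integrable in_L2T_linear f W)
  then show ?thesis unfolding g_def by simp
qed

lemma
  assumes r: "r > 1/2" and f: "in_Hs r f" and g: "in_Hs r g"
  shows integrable_Hs_mult: "(\<lambda>x. f x * g x) integrable_on {0..1}"
    and abs_integral_Hs_mult_le: "\<bar>integral {0..1} (\<lambda>x. f x * g x)\<bar> \<le> sobolev_const r * Hs_norm r f * Hs_norm r g"
proof -
  note cf = in_Hs_abs_summable_fcoeff[OF r f] and cg = in_Hs_abs_summable_fcoeff[OF r g]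
  define F where "F x = Re (fourier_series (fcoeff f) x)" for x
  define G where "G x = Re (fourier_series (fcoeff g) x)" for x
  define N where "N = {x\<in>{0..1}. f x \<noteq> F x} \<union> {x\<in>{0..1}. g x \<noteq> G x}"
  have "in_L2T f" "in_L2T g" using f g unfolding in_Hs_def by auto
  then have N: "negligible N"
    using negligible_neq_Re_fourier_series_fcoeff cf(1) cg(1) unfolding N_def F_def G_def by auto
  have eq: "f x * g x = F x * G x" if "x \<in> {0..1} - N" for x
    using that unfolding N_def by auto
  have int_FG: "(\<lambda>x. F x * G x) integrable_on {0..1}"
    unfolding F_def G_def
    by (intro integrable_continuous_interval continuous_intros continuous_on_fourier_series cf(1) cg(1))
  show "(\<lambda>x. f x * g x) integrable_on {0..1}"
    by (rule integrable_spike[OF int_FG N]) (use eq in auto)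
  define Af where "Af = (\<Sum>\<^sub>\<infinity>k. norm (fcoeff f k))"
  define Ag where "Ag = (\<Sum>\<^sub>\<infinity>k. norm (fcoeff g k))"
  have bF: "\<bar>F x\<bar> \<le> Af" and bG: "\<bar>G x\<bar> \<le> Ag" for x
    unfolding F_def G_def Af_def Ag_def
    using abs_Re_le_cmod order_trans norm_fourier_series_le[OF cf(1)] norm_fourier_series_le[OF cg(1)]
    by blast+
  have "integral {0..1} (\<lambda>x. f x * g x) = integral {0..1} (\<lambda>x. F x * G x)"
    by (rule integral_spike[OF N]) (use eq in auto)
  also have "\<bar>\<dots>\<bar> \<le> integral {0..1} (\<lambda>x::real. Af * Ag)"
    using integral_norm_bound_integral[OF int_FG integrable_const_ivl, of "Af * Ag"]
      bF bG by (simp add: abs_mult mult_mono')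
  also have "\<dots> = Af * Ag" by simp
  also have "\<dots> \<le> (sqrt (sobolev_const r) * Hs_norm r f) * (sqrt (sobolev_const r) * Hs_norm r g)"
    using cf(2) cg(2) bF[of 0] bG[of 0] unfolding Af_def[symmetric] Ag_def[symmetric]
    by (intro mult_mono) auto
  also have "\<dots> = sobolev_const r * Hs_norm r f * Hs_norm r g"
    using sobolev_const_nonneg[of r] by (simp add: algebra_simps)
  finally show "\<bar>integral {0..1} (\<lambda>x. f x * g x)\<bar> \<le> sobolev_const r * Hs_norm r f * Hs_norm r g" .
qed

lemma summable_weighted_deriv_coeffs:
  assumes "in_Hs r u"
  shows "(\<lambda>k. sob_weight (r - 1) k * (norm (deriv_coeffs (fcoeff u) k))^2) summable_on UNIV"
proof (rule summable_on_comparison_test)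
  show "(\<lambda>k. sob_weight r k * (cmod (fcoeff u k))^2) summable_on UNIV"
    using assms unfolding in_Hs_def by auto
  fix k
  have "(norm (deriv_coeffs (fcoeff u) k))^2 \<le> (1 + (2 * pi * real_of_int k)^2) * (cmod (fcoeff u k))^2"
    unfolding deriv_coeffs_def by (simp add: norm_mult power_mult_distrib mult_right_mono)
  then show "sob_weight (r - 1) k * (norm (deriv_coeffs (fcoeff u) k))^2 \<le> sob_weight r k * (cmod (fcoeff u k))^2"
    using sob_weight_pos[of "r - 1" k]
    by (subst sob_weight_minus_1) (simp add: mult.assoc mult_left_mono)
qed (simp add: less_imp_le[OF sob_weight_pos])

lemma abs_summable_deriv_coeffs:
  assumes "s > 3/2" and "in_Hs s u"
  shows "(\<lambda>k. norm (deriv_coeffs (fcoeff u) k)) summable_on UNIV"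
  using weighted_Cauchy_Schwarz_infsum(1)[OF sob_weight_pos
      summable_on_inverse_sob_weight summable_weighted_deriv_coeffs[OF assms(2)]] assms(1)
  by simp

lemma
  assumes "s > 3/2" and "in_Hs s u"
  shows in_L2T_Dx: "in_L2T (Dx u)"
    and fcoeff_Dx: "fcoeff (Dx u) = deriv_coeffs (fcoeff u)"
proof -
  let ?P = "\<lambda>g. in_L2T g \<and> (\<forall>k. fcoeff g k = \<i> * complex_of_real (2 * pi * real_of_int k) * fcoeff u k)"
  have c: "(\<lambda>k. norm (deriv_coeffs (fcoeff u) k)) summable_on UNIV"
    by (rule abs_summable_deriv_coeffs[OF assms])
  have "?P (\<lambda>x. Re (fourier_series (deriv_coeffs (fcoeff u)) x))"
    using in_L2T_Re_fourier_series[OF c]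
      fcoeff_Re_fourier_series[OF c hermitian_deriv_coeffs[OF hermitian_coeffs_fcoeff]]
    unfolding deriv_coeffs_def by blast
  then have "?P (Dx u)" unfolding Dx_def by (rule someI[of ?P])
  then show "in_L2T (Dx u)" "fcoeff (Dx u) = deriv_coeffs (fcoeff u)"
    by (auto simp: deriv_coeffs_def)
qed

definition Q_deriv_coeffs :: "(int \<Rightarrow> complex) \<Rightarrow> int \<Rightarrow> complex" where
  "Q_deriv_coeffs c k = deriv_coeffs c k / complex_of_real (1 + (2 * pi * real_of_int k)^2)"

lemma norm_Q_deriv_coeffs_le: "norm (Q_deriv_coeffs c k) \<le> norm (deriv_coeffs c k)"
proof -
  define X where "X = 1 + (2 * pi * real_of_int k)^2"
  have "1 \<le> X" unfolding X_def by simp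
  then have "norm (deriv_coeffs c k) / X \<le> norm (deriv_coeffs c k)"
    by (simp add: divide_le_eq mult_le_cancel_left1)
  with \<open>1 \<le> X\<close> show ?thesis
    unfolding Q_deriv_coeffs_def X_def[symmetric] by (simp add: norm_divide)
qed

lemma hermitian_Q_deriv_coeffs: "hermitian_coeffs c \<Longrightarrow> hermitian_coeffs (Q_deriv_coeffs c)"
  using hermitian_deriv_coeffs[of c] unfolding hermitian_coeffs_def Q_deriv_coeffs_def by simp

lemma abs_summable_Q_deriv_coeffs:
  assumes "s > 3/2" and "in_Hs s u"
  shows "(\<lambda>k. norm (Q_deriv_coeffs (fcoeff u) k)) summable_on UNIV"
  by (rule summable_on_comparison_test[OF abs_summable_deriv_coeffs[OF assms]])
    (simp_all add: norm_Q_deriv_coeffs_le)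

lemma
  assumes "s > 3/2" and "in_Hs s u"
  shows in_L2T_Qop_Dx: "in_L2T (Qop (Dx u))"
    and fcoeff_Qop_Dx: "fcoeff (Qop (Dx u)) = Q_deriv_coeffs (fcoeff u)"
proof -
  let ?P = "\<lambda>g. in_L2T g \<and>
    (\<forall>k. fcoeff g k = fcoeff (Dx u) k / complex_of_real (1 + (2 * pi * real_of_int k)^2))"
  have c: "(\<lambda>k. norm (Q_deriv_coeffs (fcoeff u) k)) summable_on UNIV"
    by (rule abs_summable_Q_deriv_coeffs[OF assms])
  have "?P (\<lambda>x. Re (fourier_series (Q_deriv_coeffs (fcoeff u)) x))"
    using in_L2T_Re_fourier_series[OF c]
      fcoeff_Re_fourier_series[OF c hermitian_Q_deriv_coeffs[OF hermitian_coeffs_fcoeff]]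
    unfolding Q_deriv_coeffs_def fcoeff_Dx[OF assms] by blast
  then have "?P (Qop (Dx u))" unfolding Qop_def by (rule someI[of ?P])
  then show "in_L2T (Qop (Dx u))" "fcoeff (Qop (Dx u)) = Q_deriv_coeffs (fcoeff u)"
    by (auto simp: Q_deriv_coeffs_def fcoeff_Dx[OF assms])
qed

section \<open>Conservation of the energy\<close>

lemma integral_square_times_deriv_eq_0:
  assumes c: "(\<lambda>k. norm (c k)) summable_on UNIV"
    and c': "(\<lambda>k. norm (deriv_coeffs c k)) summable_on UNIV"
  shows "integral {0..1} (\<lambda>x. (Re (fourier_series c x))^2 * Re (fourier_series (deriv_coeffs c) x)) = 0"
proof -
  define U where "U x = Re (fourier_series c x)" for x
  define D where "D x = Re (fourier_series (deriv_coeffs c) x)" for x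
  have "((\<lambda>x. U x ^ 3 / 3) has_vector_derivative (U x)^2 * D x) (at x within {0..1})"
    if "x \<in> {0..1}" for x
  proof -
    have "(U has_real_derivative D x) (at x within {0..1})"
      using bounded_linear.has_vector_derivative[OF bounded_linear_Re
          fourier_series_has_vector_derivative[OF c c' that]]
      unfolding U_def D_def by (simp add: has_real_derivative_iff_has_vector_derivative)
    then have "((\<lambda>x. U x ^ 3 / 3) has_real_derivative (U x)^2 * D x) (at x within {0..1})"
      by (auto intro!: derivative_eq_intros simp: power2_eq_square)
    then show ?thesis by (simp add: has_real_derivative_iff_has_vector_derivative)
  qed
  then have "((\<lambda>x. (U x)^2 * D x) has_integral (U 1 ^ 3 / 3 - U 0 ^ 3 / 3)) {0..1}"
    by (intro fundamental_theorem_of_calculus) auto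
  moreover have "U 1 = U 0" unfolding U_def by (simp add: fourier_series_at_1)
  ultimately show ?thesis unfolding U_def D_def by (simp add: integral_unique)
qed

lemma integral_Q_deriv_times_eq_0:
  assumes c: "(\<lambda>k. norm (c k)) summable_on UNIV" and h: "hermitian_coeffs c"
    and cQ: "(\<lambda>k. norm (Q_deriv_coeffs c k)) summable_on UNIV"
  shows "integral {0..1} (\<lambda>x. Re (fourier_series (Q_deriv_coeffs c) x) * Re (fourier_series c x)) = 0"
proof -
  define V where "V x = Re (fourier_series (Q_deriv_coeffs c) x)" for x
  have cont_V: "continuous_on {0..1} V"
    unfolding V_def by (intro continuous_intros continuous_on_fourier_series cQ)
  define S where "S = integral {0..1} (\<lambda>x. complex_of_real (V x) * fourier_series c x)"
  have coeff: "integral {0..1} (\<lambda>x. complex_of_real (V x) * ek k x) = Q_deriv_coeffs c (-k)" for k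
  proof -
    have "fcoeff V (-k) = Q_deriv_coeffs c (-k)"
      unfolding V_def by (rule fcoeff_Re_fourier_series[OF cQ hermitian_Q_deriv_coeffs[OF h]])
    then show ?thesis using fcoeff_eq_integral_ek[of V "-k"] by (simp add: mult.commute)
  qed
  have "continuous_on {0..1} (\<lambda>x. complex_of_real (V x))"
    by (intro continuous_intros cont_V)
  from integral_times_fourier_series[OF c this]
  have "((\<lambda>k. c k * Q_deriv_coeffs c (-k)) has_sum S) UNIV"
    unfolding S_def coeff .
  \<comment> \<open>the summand is odd in \<open>k\<close>, so the series sums to its own negative\<close>
  moreover define \<tau> where "\<tau> k = c k * Q_deriv_coeffs c (-k)" for k
  ultimately have sum: "(\<tau> has_sum S) UNIV" by (simp only: \<tau>_def[abs_def])
  have odd: "\<tau> (-k) = - \<tau> k" for k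
    unfolding \<tau>_def Q_deriv_coeffs_def deriv_coeffs_def by (simp add: field_simps)
  have "((\<lambda>k. \<tau> (-k)) has_sum S) UNIV"
    using sum by (subst has_sum_reindex_bij_betw[of uminus UNIV UNIV])
      (auto intro!: bij_betwI[of _ _ _ uminus])
  then have "(\<tau> has_sum - S) UNIV"
    by (simp add: odd has_sum_uminus)
  with sum have "S = - S" by (rule has_sum_unique)
  then have "S = 0" by simp
  have "(\<lambda>x. V x * Re (fourier_series c x)) integrable_on {0..1}"
    by (intro integrable_continuous_interval continuous_intros cont_V continuous_on_fourier_series c)
  from of_real_integral[OF this]
  have "complex_of_real (integral {0..1} (\<lambda>x. V x * Re (fourier_series c x))) = S"
    unfolding S_def by (simp add: Re_fourier_series_eq[OF h])
  with \<open>S = 0\<close> show ?thesis unfolding V_def by simp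
qed

lemma integral_FW_time_derivative_times_eq_0:
  assumes s: "s > 3/2" and u: "in_Hs s u" and N: "negligible N"
    and eq: "\<And>x. x \<in> {0..1} - N \<Longrightarrow> w x + 3 / 2 * u x * Dx u x = Qop (Dx u) x"
  shows "integral {0..1} (\<lambda>x. w x * u x) = 0"
proof -
  define c where "c = fcoeff u"
  have ca: "(\<lambda>k. norm (c k)) summable_on UNIV"
    unfolding c_def using s by (intro in_Hs_abs_summable_fcoeff(1)[OF _ u]) simp
  have cd: "(\<lambda>k. norm (deriv_coeffs c k)) summable_on UNIV"
    unfolding c_def by (rule abs_summable_deriv_coeffs[OF s u])
  have cq: "(\<lambda>k. norm (Q_deriv_coeffs c k)) summable_on UNIV"
    unfolding c_def by (rule abs_summable_Q_deriv_coeffs[OF s u])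
  define U where "U x = Re (fourier_series c x)" for x
  define D where "D x = Re (fourier_series (deriv_coeffs c) x)" for x
  define V where "V x = Re (fourier_series (Q_deriv_coeffs c) x)" for x
  define M where "M = N \<union> {x\<in>{0..1}. u x \<noteq> U x} \<union> {x\<in>{0..1}. Dx u x \<noteq> D x}
    \<union> {x\<in>{0..1}. Qop (Dx u) x \<noteq> V x}"
  have "negligible M"
    using N negligible_neq_Re_fourier_series_fcoeff[of u] negligible_neq_Re_fourier_series_fcoeff[of "Dx u"]
      negligible_neq_Re_fourier_series_fcoeff[of "Qop (Dx u)"] u ca cd cq
      in_L2T_Dx[OF s u] in_L2T_Qop_Dx[OF s u]
    unfolding M_def U_def D_def V_def c_def fcoeff_Dx[OF s u] fcoeff_Qop_Dx[OF s u] in_Hs_def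
    by auto
  have pointwise: "w x * u x = V x * U x - 3 / 2 * ((U x)^2 * D x)" if "x \<in> {0..1} - M" for x
  proof -
    have ux: "u x = U x" and "Dx u x = D x" "Qop (Dx u) x = V x" "x \<in> {0..1} - N"
      using that unfolding M_def by auto
    then have "w x + 3 / 2 * U x * D x = V x"
      using eq[of x] by simp
    then have wx: "w x = V x - 3 / 2 * U x * D x"
      unfolding eq_diff_eq .
    show ?thesis by (simp only: wx ux) (simp add: power2_eq_square algebra_simps)
  qed
  have cont: "continuous_on {0..1} U" "continuous_on {0..1} D" "continuous_on {0..1} V"
    unfolding U_def D_def V_def by (intro continuous_intros continuous_on_fourier_series ca cd cq)+
  have "integral {0..1} (\<lambda>x. w x * u x) = integral {0..1} (\<lambda>x. V x * U x - 3 / 2 * ((U x)^2 * D x))"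
    by (rule integral_spike[OF \<open>negligible M\<close>]) (use pointwise in auto)
  also have "\<dots> = integral {0..1} (\<lambda>x. V x * U x) - 3 / 2 * integral {0..1} (\<lambda>x. (U x)^2 * D x)"
    using cont by (simp add: integral_diff integrable_continuous_interval continuous_intros)
  also have "integral {0..1} (\<lambda>x. V x * U x) = 0"
    unfolding V_def U_def
    by (rule integral_Q_deriv_times_eq_0[OF ca _ cq]) (simp add: c_def hermitian_coeffs_fcoeff)
  also have "integral {0..1} (\<lambda>x. (U x)^2 * D x) = 0"
    unfolding U_def D_def by (rule integral_square_times_deriv_eq_0[OF ca cd])
  finally show ?thesis by simp
qed

lemma energy_difference_quotient_le:
  fixes u v w :: "real \<Rightarrow> real" and h r :: real
  assumes r: "r > 1/2" and u: "in_Hs r u" and v: "in_Hs r v" and w: "in_Hs r w"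
    and h: "h \<noteq> 0" and orth: "integral {0..1} (\<lambda>x. w x * u x) = 0"
  defines "\<Delta> \<equiv> \<lambda>x. v x - u x"
    and "D \<equiv> \<lambda>x. (v x - u x) / h - w x"
  shows "\<bar>(integral {0..1} (\<lambda>x. (v x)^2) - integral {0..1} (\<lambda>x. (u x)^2)) / h\<bar>
    \<le> sobolev_const r * (Hs_norm r w * Hs_norm r \<Delta> + Hs_norm r D * Hs_norm r \<Delta> + 2 * (Hs_norm r D * Hs_norm r u))"
proof -
  have \<Delta>: "in_Hs r \<Delta>" unfolding \<Delta>_def using in_Hs_linear[OF v u, of 1 "-1"] by simp
  have D: "in_Hs r D" unfolding D_def using in_Hs_linear[OF \<Delta> w, of "1 / h" "-1"] by (simp add: \<Delta>_def)
  have sq: "(\<lambda>x. (v x)^2) integrable_on {0..1}" "(\<lambda>x. (u x)^2) integrable_on {0..1}"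
    using u v unfolding in_Hs_def in_L2T_def by auto
  note p1 = integrable_Hs_mult[OF r w \<Delta>] abs_integral_Hs_mult_le[OF r w \<Delta>]
    and p2 = integrable_Hs_mult[OF r D \<Delta>] abs_integral_Hs_mult_le[OF r D \<Delta>]
    and p3 = integrable_Hs_mult[OF r w u]
    and p4 = integrable_Hs_mult[OF r D u] abs_integral_Hs_mult_le[OF r D u]
  have "(v x)^2 - (u x)^2 = h * (w x * \<Delta> x + D x * \<Delta> x + 2 * (w x * u x) + 2 * (D x * u x))" for x
  proof -
    have "\<Delta> x = h * (w x + D x)" unfolding \<Delta>_def D_def using h by (simp add: field_simps)
    moreover have "(v x)^2 - (u x)^2 = \<Delta> x * (\<Delta> x + 2 * u x)"
      unfolding \<Delta>_def by (simp add: power2_eq_square algebra_simps)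
    ultimately show ?thesis by (simp add: algebra_simps)
  qed
  then have "integral {0..1} (\<lambda>x. (v x)^2) - integral {0..1} (\<lambda>x. (u x)^2)
      = h * (integral {0..1} (\<lambda>x. w x * \<Delta> x) + integral {0..1} (\<lambda>x. D x * \<Delta> x)
        + 2 * integral {0..1} (\<lambda>x. w x * u x) + 2 * integral {0..1} (\<lambda>x. D x * u x))"
    using p1(1) p2(1) p3 p4(1)
    by (simp add: integral_diff[OF sq, symmetric] integral_mult_right integral_add
        integrable_add integrable_on_mult_right)
  then have "(integral {0..1} (\<lambda>x. (v x)^2) - integral {0..1} (\<lambda>x. (u x)^2)) / h =
      integral {0..1} (\<lambda>x. w x * \<Delta> x) + integral {0..1} (\<lambda>x. D x * \<Delta> x)
      + 2 * integral {0..1} (\<lambda>x. D x * u x)"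
    using h orth by simp
  also have "\<bar>\<dots>\<bar> \<le> sobolev_const r * Hs_norm r w * Hs_norm r \<Delta> + sobolev_const r * Hs_norm r D * Hs_norm r \<Delta>
      + 2 * (sobolev_const r * Hs_norm r D * Hs_norm r u)"
    using p1(2) p2(2) p4(2) by linarith
  finally show ?thesis by (simp add: algebra_simps)
qed

lemma tendsto_at_within_shift:
  fixes g :: "real \<Rightarrow> real"
  assumes "(g \<longlongrightarrow> 0) (at 0 within {h. t + h \<in> S})"
  shows "((\<lambda>y. g (y - t)) \<longlongrightarrow> 0) (at t within S)"
proof (rule tendstoI)
  fix e :: real assume "e > 0"
  with assms obtain d where "d > 0"
    and d: "\<And>h. t + h \<in> S \<Longrightarrow> h \<noteq> 0 \<and> dist h 0 < d \<Longrightarrow> dist (g h) 0 < e"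
    unfolding tendsto_iff eventually_at by auto
  then show "eventually (\<lambda>y. dist (g (y - t)) 0 < e) (at t within S)"
    unfolding eventually_at by (intro exI[of _ d]) (auto simp: dist_real_def)
qed

lemma FW_solution_time_derivative:
  assumes s: "s > 3/2" and sol: "FW_solution s u0 T0 u"
  obtains w where "\<And>t. t \<in> {0..T0} \<Longrightarrow> in_Hs (s - 1) (w t)"
    and "\<And>t. t \<in> {0..T0} \<Longrightarrow> ((\<lambda>h. Hs_norm (s - 1) (\<lambda>x. (u (t + h) x - u t x) / h - w t x)) \<longlongrightarrow> 0)
                                (at 0 within {h. t + h \<in> {0..T0}})"
    and "\<And>t. t \<in> {0..T0} \<Longrightarrow> integral {0..1} (\<lambda>x. w t x * u t x) = 0"
proof -
  obtain w where w: "\<And>t. t \<in> {0..T0} \<Longrightarrow> in_Hs (s - 1) (w t)"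
    and lim: "\<And>t. t \<in> {0..T0} \<Longrightarrow> ((\<lambda>h. Hs_norm (s - 1) (\<lambda>x. (u (t + h) x - u t x) / h - w t x)) \<longlongrightarrow> 0)
                           (at 0 within {h. t + h \<in> {0..T0}})"
    and eq: "\<And>t. t \<in> {0..T0} \<Longrightarrow> AE x in lborel. w t x + 3 / 2 * u t x * Dx (u t) x = Qop (Dx (u t)) x"
    using sol unfolding FW_solution_def by blast
  have orth: "integral {0..1} (\<lambda>x. w t x * u t x) = 0" if t: "t \<in> {0..T0}" for t
  proof -
    obtain N where "negligible N"
      and "\<And>x. x \<notin> N \<Longrightarrow> w t x + 3 / 2 * u t x * Dx (u t) x = Qop (Dx (u t)) x"
      using AE_completion[OF eq[OF t]] by (force simp: eventually_ae_filter_negligible)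
    then show ?thesis
      using sol t s unfolding FW_solution_def
      by (intro integral_FW_time_derivative_times_eq_0[of s]) auto
  qed
  from that[OF w lim orth] show thesis .
qed

lemma energy_has_derivative_0:
  assumes r: "r > 1/2" and t: "t \<in> S"
    and H: "\<And>y. y \<in> S \<Longrightarrow> in_Hs r (u y)"
    and cont: "((\<lambda>y. Hs_norm r (\<lambda>x. u y x - u t x)) \<longlongrightarrow> 0) (at t within S)"
    and w: "in_Hs r w"
    and diff: "((\<lambda>y. Hs_norm r (\<lambda>x. (u y x - u t x) / (y - t) - w x)) \<longlongrightarrow> 0) (at t within S)"
    and orth: "integral {0..1} (\<lambda>x. w x * u t x) = 0"
  shows "((\<lambda>y. integral {0..1} (\<lambda>x. (u y x)^2)) has_derivative (\<lambda>h. 0)) (at t within S)"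
proof -
  define E where "E y = integral {0..1} (\<lambda>x. (u y x)^2)" for y
  define N where "N y = Hs_norm r (\<lambda>x. u y x - u t x)" for y
  define ND where "ND y = Hs_norm r (\<lambda>x. (u y x - u t x) / (y - t) - w x)" for y
  define g where "g y = sobolev_const r * (Hs_norm r w * N y + ND y * N y + 2 * (ND y * Hs_norm r (u t)))" for y
  have "(g \<longlongrightarrow> sobolev_const r * (Hs_norm r w * 0 + 0 * 0 + 2 * (0 * Hs_norm r (u t)))) (at t within S)"
    unfolding g_def using cont diff unfolding N_def[symmetric] ND_def[symmetric] by (intro tendsto_intros)
  then have lim_g: "(g \<longlongrightarrow> 0) (at t within S)" by simp
  have "norm ((1 / norm (y - t)) *\<^sub>R (E y - (E t + 0))) \<le> g y" if "y \<in> S" "y \<noteq> t" for y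
  proof -
    have "y - t \<noteq> 0" using that(2) by simp
    from energy_difference_quotient_le[OF r H[OF t] H[OF that(1)] w this orth]
    have "\<bar>(E y - E t) / (y - t)\<bar> \<le> g y"
      unfolding E_def g_def N_def ND_def .
    then show ?thesis by (simp add: abs_divide)
  qed
  then have bound: "eventually (\<lambda>y. norm ((1 / norm (y - t)) *\<^sub>R (E y - (E t + 0))) \<le> g y) (at t within S)"
    unfolding eventually_at_filter by (intro always_eventually) blast
  show ?thesis
    unfolding has_derivative_within E_def[symmetric]
    by (intro conjI bounded_linear_zero Lim_null_comparison[OF bound lim_g])
qed

lemma FW_energy_conserved:
  assumes s: "s > 3/2" and sol: "FW_solution s u0 T0 u" and "t \<in> {0..T0}"
  shows "integral {0..1} (\<lambda>x. (u t x)^2) = integral {0..1} (\<lambda>x. (u0 x)^2)"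
proof -
  have r: "s - 1 > 1/2" using s by simp
  have H: "\<And>t. t \<in> {0..T0} \<Longrightarrow> in_Hs s (u t)" and "u 0 = u0"
    and C: "\<And>t. t \<in> {0..T0} \<Longrightarrow> ((\<lambda>\<tau>. Hs_norm s (\<lambda>x. u \<tau> x - u t x)) \<longlongrightarrow> 0) (at t within {0..T0})"
    using sol unfolding FW_solution_def by auto
  obtain w where W: "\<And>t. t \<in> {0..T0} \<Longrightarrow> in_Hs (s - 1) (w t)"
    and lim: "\<And>t. t \<in> {0..T0} \<Longrightarrow> ((\<lambda>h. Hs_norm (s - 1) (\<lambda>x. (u (t + h) x - u t x) / h - w t x)) \<longlongrightarrow> 0)
                                (at 0 within {h. t + h \<in> {0..T0}})"
    and orth: "\<And>t. t \<in> {0..T0} \<Longrightarrow> integral {0..1} (\<lambda>x. w t x * u t x) = 0"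
    by (rule FW_solution_time_derivative[OF s sol]) (rule that)
  have deriv: "((\<lambda>t. integral {0..1} (\<lambda>x. (u t x)^2)) has_derivative (\<lambda>h. 0)) (at t within {0..T0})"
    if t: "t \<in> {0..T0}" for t
  proof (rule energy_has_derivative_0[where u = u and w = "w t", OF r t _ _ W[OF t] _ orth[OF t]])
    show "in_Hs (s - 1) (u y)" if "y \<in> {0..T0}" for y
      using in_Hs_mono(1)[OF H[OF that]] by simp
    have "Hs_norm (s - 1) (\<lambda>x. u y x - u t x) \<le> Hs_norm s (\<lambda>x. u y x - u t x)" if "y \<in> {0..T0}" for y
      using in_Hs_mono(2)[OF in_Hs_linear[OF H[OF that] H[OF t], of 1 "-1"], of "s - 1"] by simp
    then have "eventually (\<lambda>y. norm (Hs_norm (s - 1) (\<lambda>x. u y x - u t x)) \<le> Hs_norm s (\<lambda>x. u y x - u t x))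
        (at t within {0..T0})"
      unfolding eventually_at_filter by (intro always_eventually) (auto simp: Hs_norm_nonneg)
    then show "((\<lambda>y. Hs_norm (s - 1) (\<lambda>x. u y x - u t x)) \<longlongrightarrow> 0) (at t within {0..T0})"
      by (rule Lim_null_comparison[OF _ C[OF t]])
    show "((\<lambda>y. Hs_norm (s - 1) (\<lambda>x. (u y x - u t x) / (y - t) - w t x)) \<longlongrightarrow> 0) (at t within {0..T0})"
      using tendsto_at_within_shift[OF lim[OF t]] by simp
  qed
  obtain c where "\<And>t. t \<in> {0..T0} \<Longrightarrow> integral {0..1} (\<lambda>x. (u t x)^2) = c"
    using has_derivative_zero_constant[OF convex_real_interval(5) deriv] by blast
  from this[of t] this[of 0] \<open>u 0 = u0\<close> \<open>t \<in> {0..T0}\<close> show ?thesis by simp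
qed

lemma L2T_norm_nonneg: "L2T_norm f \<ge> 0"
  unfolding L2T_norm_def
  by (cases "(\<lambda>x. (f x)^2) integrable_on {0..1}") (simp_all add: integral_nonneg not_integrable_integral)

theorem mainTheorem2:
  fixes s :: real and u0 :: "real \<Rightarrow> real" and u :: "real \<Rightarrow> real \<Rightarrow> real" and T :: ereal
  assumes "s > 3 / 2"
    and "in_Hs s u0"
    and "T = life_span s u0"
    and "\<forall>T0. 0 < T0 \<and> ereal T0 < T \<longrightarrow> FW_solution s u0 T0 u"
  shows "\<forall>t. 0 \<le> t \<and> ereal t < T \<longrightarrow> L2T_norm (u t) \<le> exp t * L2T_norm u0"
proof (intro allI impI)
  \<comment> \<open>\<open>in_Hs s u0\<close> and the value of \<open>T\<close> are not needed: the energy is conserved on every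
    interval on which \<open>u\<close> is a solution\<close>
  fix t :: real assume t: "0 \<le> t \<and> ereal t < T"
  then obtain T0 where "t < T0" "ereal T0 < T"
    using ereal_dense2 by force
  then have "FW_solution s u0 T0 u" using assms(4) t by auto
  then have "L2T_norm (u t) = L2T_norm u0"
    unfolding L2T_norm_def using FW_energy_conserved[OF assms(1)] t \<open>t < T0\<close> by simp
  also have "\<dots> \<le> exp t * L2T_norm u0"
    using L2T_norm_nonneg[of u0] t by (simp add: mult_le_cancel_right1)
  finally show "L2T_norm (u t) \<le> exp t * L2T_norm u0" .
qed

end
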